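(* Let $\beta_1,\beta_2\ge0$ and for each $n$ let $\mathbf{X}\sim\mathbb{P}_{\beta_1,\mathbf{Q}^{\mathrm{CW}}}$ and $\mathbf{Y}\sim\mathbb{P}_{\beta_2,\mathbf{Q}^{\mathrm{CW}}}$ be independent. Then $\sqrt{n}\,\rho_n\xrightarrow{d}N(0,1)$.
   Context: Ising model: for an $n\times n$ symmetric matrix $\mathbf{Q}_n$ with zero diagonal and $\beta\ge0$, $\mathbb{P}_{\beta,\mathbf{Q}_n}(\mathbf{Z}=\mathbf{z})=Z(\beta,\mathbf{Q}_n)^{-1}\exp\big(\tfrac{\beta}{2}\mathbf{z}^\top\mathbf{Q}_n\mathbf{z}\big)$ for $\mathbf{z}\in\{\pm1\}^n$. Curie–Weiss model: $\mathbf{Q}^{\mathrm{CW}}=\frac1n(\mathbf{1}\mathbf{1}^\top-I_n)$. Sample correlation: $\rho_n=\frac{\sum_{i}(X_i-\overline{\mathbf{X}}_n)(Y_i-\overline{\mathbf{Y}}_n)}{\sqrt{\sum_i(X_i-\overline{\mathbf{X}}_n)^2}\sqrt{\sum_i(Y_i-\overline{\mathbf{Y}}_n)^2}}$, with $\overline{\mathbf{X}}_n,\overline{\mathbf{Y}}_n$ the sample means. *)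

theory Defs
  imports "HOL-Probability.Probability"
begin

definition spins :: "nat \<Rightarrow> (nat \<Rightarrow> real) set" where
  "spins n = PiE {..<n} (\<lambda>_. {-1, 1})"

definition quad_form :: "nat \<Rightarrow> (nat \<Rightarrow> nat \<Rightarrow> real) \<Rightarrow> (nat \<Rightarrow> real) \<Rightarrow> real" where
  "quad_form n Q z = (\<Sum>i<n. \<Sum>j<n. z i * Q i j * z j)"

definition ising_Z :: "nat \<Rightarrow> real \<Rightarrow> (nat \<Rightarrow> nat \<Rightarrow> real) \<Rightarrow> real" where
  "ising_Z n \<beta> Q = (\<Sum>z\<in>spins n. exp (\<beta> / 2 * quad_form n Q z))"

definition ising :: "nat \<Rightarrow> real \<Rightarrow> (nat \<Rightarrow> nat \<Rightarrow> real) \<Rightarrow> (nat \<Rightarrow> real) measure" where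
  "ising n \<beta> Q = point_measure (spins n)
     (\<lambda>z. ennreal (exp (\<beta> / 2 * quad_form n Q z) / ising_Z n \<beta> Q))"

definition Q_CW :: "nat \<Rightarrow> nat \<Rightarrow> nat \<Rightarrow> real" where
  "Q_CW n i j = (if i = j then 0 else 1 / real n)"

definition sample_mean :: "nat \<Rightarrow> (nat \<Rightarrow> real) \<Rightarrow> real" where
  "sample_mean n x = (\<Sum>i<n. x i) / real n"

definition sample_corr :: "nat \<Rightarrow> (nat \<Rightarrow> real) \<Rightarrow> (nat \<Rightarrow> real) \<Rightarrow> real" where
  "sample_corr n x y =
     (\<Sum>i<n. (x i - sample_mean n x) * (y i - sample_mean n y)) /
     (sqrt (\<Sum>i<n. (x i - sample_mean n x)\<^sup>2) * sqrt (\<Sum>i<n. (y i - sample_mean n y)\<^sup>2))"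

end

theory Submission
  imports Defs
begin

(*
  For independent product laws with spin means a and b (|a|, |b| < 1), the statistic sqrt n * rho_n equals
  (s G - sqrt n Dx Dy) / s', where G = n^(-1/2) * sum_i (x_i - a)(y_i - b) / s is a normalised sum of
  i.i.d. centred variables of variance one, Dx and Dy are the deviations of the sample means from a and b,
  and s, s' are sqrt ((1 - a^2)(1 - b^2)) at the true and at the sample means.  A third-order Taylor bound
  puts the characteristic function of G within O(n^(-1/2)) of (1 - t^2/(2n))^n, and since E Dx^2 = O(1/n)
  the perturbation costs another O(n^(-1/2)); both errors are uniform in |a|, |b| <= A < 1.

  The Hubbard-Stratonovich transform writes each Curie-Weiss law as a mixture over w of product laws with
  mean tanh (sqrt (beta/n) w).  For H >= 8 beta the weights with |sqrt (beta/n) w| > H carry relative mass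
  at most sqrt 2 * exp (-n H), and all remaining means are bounded by tanh H < 1.  Hence the characteristic
  function of sqrt n * rho_n tends to exp (-t^2/2), and Levy's continuity theorem concludes.
*)

section \<open>Product laws on spin configurations\<close>

lemma finite_spins [simp]: "finite (spins n)"
  unfolding spins_def by (intro finite_PiE) auto

lemma spins_nonempty: "spins n \<noteq> {}"
  unfolding spins_def by (simp add: PiE_eq_empty_iff)

lemma spins_val: "x \<in> spins n \<Longrightarrow> i < n \<Longrightarrow> x i = -1 \<or> x i = 1"
  unfolding spins_def by (auto simp: PiE_def Pi_def)

lemma spins_sq: "x \<in> spins n \<Longrightarrow> i < n \<Longrightarrow> (x i)\<^sup>2 = 1"
  using spins_val[of x n i] by auto

lemma sum_spins2_prod:
  fixes g :: "nat \<Rightarrow> real \<Rightarrow> real \<Rightarrow> 'c::comm_semiring_1"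
  shows "(\<Sum>x\<in>spins n. \<Sum>y\<in>spins n. \<Prod>i<n. g i (x i) (y i)) =
         (\<Prod>i<n. \<Sum>u\<in>{-1,1}. \<Sum>v\<in>{-1,1}. g i u v)"
proof -
  have "(\<Sum>y\<in>spins n. \<Prod>i<n. g i (x i) (y i)) = (\<Prod>i<n. \<Sum>v\<in>{-1,1}. g i (x i) v)" for x
    unfolding spins_def by (rule prod_sum_PiE[symmetric]) auto
  then have "(\<Sum>x\<in>spins n. \<Sum>y\<in>spins n. \<Prod>i<n. g i (x i) (y i)) =
             (\<Sum>x\<in>spins n. \<Prod>i<n. \<Sum>v\<in>{-1,1}. g i (x i) v)"
    by simp
  also have "\<dots> = (\<Prod>i<n. \<Sum>u\<in>{-1,1}. \<Sum>v\<in>{-1,1}. g i u v)"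
    unfolding spins_def by (rule prod_sum_PiE[symmetric]) auto
  finally show ?thesis .
qed

text \<open>\<open>bern_weight n a\<close> is the law of n independent spins of mean a, and \<open>pair_expect n a b\<close>
  integrates against two independent such configurations; both are probability weights once
  \<open>\<bar>a\<bar>, \<bar>b\<bar> \<le> 1\<close>.\<close>
definition spin_prob :: "real \<Rightarrow> real \<Rightarrow> real" where
  "spin_prob a u = (1 + a * u) / 2"

definition bern_weight :: "nat \<Rightarrow> real \<Rightarrow> (nat \<Rightarrow> real) \<Rightarrow> real" where
  "bern_weight n a x = (\<Prod>i<n. spin_prob a (x i))"

definition spin_expect :: "nat \<Rightarrow> real \<Rightarrow> ((nat \<Rightarrow> real) \<Rightarrow> real) \<Rightarrow> real" where
  "spin_expect n a G = (\<Sum>x\<in>spins n. bern_weight n a x * G x)"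

definition site_expect :: "real \<Rightarrow> real \<Rightarrow> (real \<Rightarrow> real \<Rightarrow> 'c::{real_algebra_1,comm_ring_1}) \<Rightarrow> 'c" where
  "site_expect a b f = (\<Sum>u\<in>{-1,1}. \<Sum>v\<in>{-1,1}. of_real (spin_prob a u * spin_prob b v) * f u v)"

definition pair_expect ::
  "nat \<Rightarrow> real \<Rightarrow> real \<Rightarrow> ((nat \<Rightarrow> real) \<Rightarrow> (nat \<Rightarrow> real) \<Rightarrow> 'c::{real_algebra_1,comm_ring_1}) \<Rightarrow> 'c" where
  "pair_expect n a b G =
     (\<Sum>x\<in>spins n. \<Sum>y\<in>spins n. of_real (bern_weight n a x * bern_weight n b y) * G x y)"

lemma spin_prob_nonneg: "\<bar>a\<bar> \<le> 1 \<Longrightarrow> u \<in> {-1,1} \<Longrightarrow> spin_prob a u \<ge> 0"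
  unfolding spin_prob_def by auto

lemma bern_weight_nonneg: "\<bar>a\<bar> \<le> 1 \<Longrightarrow> x \<in> spins n \<Longrightarrow> bern_weight n a x \<ge> 0"
  unfolding bern_weight_def by (intro prod_nonneg) (use spins_val spin_prob_nonneg in blast)

lemma sum_bern_weight: "(\<Sum>x\<in>spins n. bern_weight n a x) = 1"
proof -
  have "(\<Sum>x\<in>spins n. bern_weight n a x) = (\<Prod>i<n. \<Sum>u\<in>{-1,1}. spin_prob a u)"
    unfolding bern_weight_def spins_def by (rule prod_sum_PiE[symmetric]) auto
  also have "\<dots> = 1" unfolding spin_prob_def by (simp add: add_divide_distrib[symmetric])
  finally show ?thesis .
qed

lemma site_expect_real:
  fixes f :: "real \<Rightarrow> real \<Rightarrow> real"
  shows "site_expect a b f =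
    spin_prob a (-1) * spin_prob b (-1) * f (-1) (-1) + spin_prob a (-1) * spin_prob b 1 * f (-1) 1
    + spin_prob a 1 * spin_prob b (-1) * f 1 (-1) + spin_prob a 1 * spin_prob b 1 * f 1 1"
  unfolding site_expect_def by simp

lemma site_expect_add: "site_expect a b (\<lambda>u v. f u v + g u v) = site_expect a b f + site_expect a b g"
  unfolding site_expect_def by (simp add: distrib_left sum.distrib)

lemma site_expect_diff: "site_expect a b (\<lambda>u v. f u v - g u v) = site_expect a b f - site_expect a b g"
  unfolding site_expect_def by (simp add: right_diff_distrib sum_subtractf)

lemma site_expect_cmult: "site_expect a b (\<lambda>u v. c * f u v) = c * site_expect a b f"
  unfolding site_expect_def by (simp add: algebra_simps)

lemma site_expect_of_real: "site_expect a b (\<lambda>u v. of_real (f u v)) = of_real (site_expect a b f)"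
  unfolding site_expect_def by simp

lemma site_expect_const: "site_expect a b (\<lambda>u v. c) = c"
proof -
  have one: "(\<Sum>u\<in>{-1,1}. \<Sum>v\<in>{-1,1}. spin_prob a u * spin_prob b v) = 1"
    unfolding spin_prob_def by (simp add: field_simps)
  have "site_expect a b (\<lambda>u v. c) =
        of_real (\<Sum>u\<in>{-1,1}. \<Sum>v\<in>{-1,1}. spin_prob a u * spin_prob b v) * c"
    unfolding site_expect_def by (simp only: of_real_sum sum_distrib_right)
  then show ?thesis by (simp only: one of_real_1 mult_1)
qed

lemma site_expect_mono:
  fixes f g :: "real \<Rightarrow> real \<Rightarrow> real"
  assumes "\<bar>a\<bar> \<le> 1" "\<bar>b\<bar> \<le> 1" "\<And>u v. u \<in> {-1,1} \<Longrightarrow> v \<in> {-1,1} \<Longrightarrow> f u v \<le> g u v"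
  shows "site_expect a b f \<le> site_expect a b g"
  unfolding site_expect_def using spin_prob_nonneg[OF assms(1)] spin_prob_nonneg[OF assms(2)] assms(3)
  by (intro sum_mono) (simp add: mult_left_mono)

lemma norm_site_expect_le:
  fixes f :: "real \<Rightarrow> real \<Rightarrow> 'c::real_normed_field"
  assumes "\<bar>a\<bar> \<le> 1" "\<bar>b\<bar> \<le> 1"
  shows "norm (site_expect a b f) \<le> site_expect a b (\<lambda>u v. norm (f u v))"
proof -
  have "norm (site_expect a b f) \<le>
        (\<Sum>u\<in>{-1,1}. \<Sum>v\<in>{-1,1}. norm (of_real (spin_prob a u * spin_prob b v) * f u v))"
    unfolding site_expect_def by (rule order.trans[OF norm_sum sum_mono[OF norm_sum]])
  also have "\<dots> = site_expect a b (\<lambda>u v. norm (f u v))"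
    unfolding site_expect_def using spin_prob_nonneg assms
    by (intro sum.cong refl) (simp add: norm_mult)
  finally show ?thesis .
qed

lemma pair_expect_prod:
  "pair_expect n a b (\<lambda>x y. \<Prod>i<n. f i (x i) (y i)) = (\<Prod>i<n. site_expect a b (f i))"
proof -
  have "pair_expect n a b (\<lambda>x y. \<Prod>i<n. f i (x i) (y i)) =
     (\<Sum>x\<in>spins n. \<Sum>y\<in>spins n.
        \<Prod>i<n. of_real (spin_prob a (x i) * spin_prob b (y i)) * f i (x i) (y i))"
    unfolding pair_expect_def bern_weight_def
    by (intro sum.cong refl) (simp add: prod.distrib of_real_prod)
  also have "\<dots> = (\<Prod>i<n. site_expect a b (f i))"
    unfolding site_expect_def by (rule sum_spins2_prod)
  finally show ?thesis .
qed

lemma pair_expect_sum: "pair_expect n a b (\<lambda>x y. \<Sum>i\<in>I. G i x y) = (\<Sum>i\<in>I. pair_expect n a b (G i))"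
  unfolding pair_expect_def by (simp add: sum_distrib_left sum.swap[of _ I])

lemma pair_expect_cmult: "pair_expect n a b (\<lambda>x y. c * G x y) = c * pair_expect n a b G"
  unfolding pair_expect_def by (simp add: sum_distrib_left mult.left_commute)

lemma pair_expect_add:
  "pair_expect n a b (\<lambda>x y. G x y + K x y) = pair_expect n a b G + pair_expect n a b K"
  unfolding pair_expect_def by (simp add: distrib_left sum.distrib)

lemma pair_expect_diff:
  "pair_expect n a b (\<lambda>x y. G x y - K x y) = pair_expect n a b G - pair_expect n a b K"
  unfolding pair_expect_def by (simp add: right_diff_distrib sum_subtractf)

lemma pair_expect_const:
  fixes c :: "'c::{real_algebra_1,comm_ring_1}"
  shows "pair_expect n a b (\<lambda>x y. c) = c"
  using pair_expect_prod[of n a b "\<lambda>i u v. 1 :: 'c"] pair_expect_cmult[of n a b c "\<lambda>x y. 1"]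
  by (simp add: site_expect_const)

lemma pair_expect_Re: "Re (pair_expect n a b G) = pair_expect n a b (\<lambda>x y. Re (G x y))"
  unfolding pair_expect_def by simp

lemma pair_expect_Im: "Im (pair_expect n a b G) = pair_expect n a b (\<lambda>x y. Im (G x y))"
  unfolding pair_expect_def by simp

lemma pair_expect_mono:
  fixes G K :: "(nat \<Rightarrow> real) \<Rightarrow> (nat \<Rightarrow> real) \<Rightarrow> real"
  assumes "\<bar>a\<bar> \<le> 1" "\<bar>b\<bar> \<le> 1"
    and "\<And>x y. x \<in> spins n \<Longrightarrow> y \<in> spins n \<Longrightarrow> G x y \<le> K x y"
  shows "pair_expect n a b G \<le> pair_expect n a b K"
  unfolding pair_expect_def using bern_weight_nonneg[OF assms(1)] bern_weight_nonneg[OF assms(2)] assms(3)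
  by (intro sum_mono) (simp add: mult_left_mono)

lemma norm_pair_expect_le:
  fixes G :: "(nat \<Rightarrow> real) \<Rightarrow> (nat \<Rightarrow> real) \<Rightarrow> 'c::real_normed_field"
  assumes "\<bar>a\<bar> \<le> 1" "\<bar>b\<bar> \<le> 1"
  shows "norm (pair_expect n a b G) \<le> pair_expect n a b (\<lambda>x y. norm (G x y))"
proof -
  have "norm (pair_expect n a b G) \<le>
        (\<Sum>x\<in>spins n. \<Sum>y\<in>spins n. norm (of_real (bern_weight n a x * bern_weight n b y) * G x y))"
    unfolding pair_expect_def by (rule order.trans[OF norm_sum sum_mono[OF norm_sum]])
  also have "\<dots> = pair_expect n a b (\<lambda>x y. norm (G x y))"
    unfolding pair_expect_def using bern_weight_nonneg assms
    by (intro sum.cong refl) (simp add: norm_mult)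
  finally show ?thesis .
qed

lemma pair_expect_two_sites:
  fixes f :: "real \<Rightarrow> real \<Rightarrow> 'c::{real_algebra_1,comm_ring_1}"
  assumes "i < n" "j < n"
  shows "pair_expect n a b (\<lambda>x y. f (x i) (y i) * f (x j) (y j)) =
     (if i = j then site_expect a b (\<lambda>u v. f u v * f u v) else site_expect a b f * site_expect a b f)"
proof (cases "i = j")
  case True
  have "pair_expect n a b (\<lambda>x y. f (x i) (y i) * f (x j) (y j)) =
        pair_expect n a b (\<lambda>x y. \<Prod>k<n. (if k = i then (\<lambda>u v. f u v * f u v) else (\<lambda>u v. 1)) (x k) (y k))"
    using True assms by (simp add: if_distrib[where f="\<lambda>g. g _ _"] prod.delta cong: if_cong)
  also have "\<dots> = (\<Prod>k<n. site_expect a b (if k = i then (\<lambda>u v. f u v * f u v) else (\<lambda>u v. 1)))"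
    by (rule pair_expect_prod)
  also have "\<dots> = site_expect a b (\<lambda>u v. f u v * f u v)"
    using assms by (simp add: if_distrib[where f="site_expect a b"] site_expect_const prod.delta cong: if_cong)
  finally show ?thesis using True by simp
next
  case False
  define g where "g k = (if k = i then f else (\<lambda>u v. 1))" for k
  define h where "h k = (if k = j then f else (\<lambda>u v. 1))" for k
  have "pair_expect n a b (\<lambda>x y. f (x i) (y i) * f (x j) (y j)) =
        pair_expect n a b (\<lambda>x y. \<Prod>k<n. g k (x k) (y k) * h k (x k) (y k))"
    using False assms unfolding g_def h_def
    by (simp add: if_distrib[where f="\<lambda>g. g _ _"] prod.distrib prod.delta cong: if_cong)
  also have "\<dots> = (\<Prod>k<n. site_expect a b (\<lambda>u v. g k u v * h k u v))"
    by (rule pair_expect_prod)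
  also have "\<dots> = (\<Prod>k<n. (if k = i then site_expect a b f else 1) * (if k = j then site_expect a b f else 1))"
    using False unfolding g_def h_def by (intro prod.cong refl) (auto simp: site_expect_const)
  also have "\<dots> = site_expect a b f * site_expect a b f"
    using assms by (simp add: prod.distrib prod.delta)
  finally show ?thesis using False by simp
qed

text \<open>Centred site variables are uncorrelated across sites, so only the diagonal survives.\<close>
lemma pair_expect_sum_sq:
  fixes f :: "real \<Rightarrow> real \<Rightarrow> 'c::{real_algebra_1,comm_ring_1}"
  assumes "site_expect a b f = 0"
  shows "pair_expect n a b (\<lambda>x y. (\<Sum>i<n. f (x i) (y i))\<^sup>2) = of_nat n * site_expect a b (\<lambda>u v. f u v * f u v)"
proof -
  have "pair_expect n a b (\<lambda>x y. (\<Sum>i<n. f (x i) (y i))\<^sup>2) =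
        pair_expect n a b (\<lambda>x y. \<Sum>i<n. \<Sum>j<n. f (x i) (y i) * f (x j) (y j))"
    by (simp add: power2_eq_square sum_product)
  also have "\<dots> = (\<Sum>i<n. \<Sum>j<n. pair_expect n a b (\<lambda>x y. f (x i) (y i) * f (x j) (y j)))"
    by (simp add: pair_expect_sum)
  also have "\<dots> = (\<Sum>i<n. \<Sum>j<n. if i = j then site_expect a b (\<lambda>u v. f u v * f u v) else 0)"
    using assms by (intro sum.cong refl) (simp add: pair_expect_two_sites)
  also have "\<dots> = of_nat n * site_expect a b (\<lambda>u v. f u v * f u v)"
    by simp
  finally show ?thesis .
qed

lemma spin_expect_const: "spin_expect n a (\<lambda>x. c) = c"
  unfolding spin_expect_def by (simp add: sum_bern_weight flip: sum_distrib_right)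

lemma abs_spin_expect_le:
  assumes "\<bar>a\<bar> \<le> 1" "\<And>x. x \<in> spins n \<Longrightarrow> \<bar>G x\<bar> \<le> c"
  shows "\<bar>spin_expect n a G\<bar> \<le> c"
proof -
  have "\<bar>spin_expect n a G\<bar> \<le> (\<Sum>x\<in>spins n. \<bar>bern_weight n a x * G x\<bar>)"
    unfolding spin_expect_def by (rule sum_abs)
  also have "\<dots> \<le> (\<Sum>x\<in>spins n. bern_weight n a x * c)"
    using bern_weight_nonneg[OF assms(1)] assms(2) by (intro sum_mono) (simp add: abs_mult mult_left_mono)
  also have "\<dots> = c" by (simp add: sum_bern_weight flip: sum_distrib_right)
  finally show ?thesis .
qed

lemma spin_expect_sum:
  "spin_expect n a (\<lambda>x. \<Sum>y\<in>Y. f y * D x y) = (\<Sum>y\<in>Y. f y * spin_expect n a (\<lambda>x. D x y))"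
  unfolding spin_expect_def sum_distrib_left by (rule trans[OF sum.swap]) (simp add: mult_ac)

lemma spin_expect_nested:
  "spin_expect n a (\<lambda>x. spin_expect n b (\<lambda>y. D x y)) = pair_expect n a b D"
  unfolding spin_expect_def pair_expect_def by (simp add: sum_distrib_left mult_ac)

section \<open>The sample correlation under product laws\<close>

definition corr_scale :: "real \<Rightarrow> real \<Rightarrow> real" where
  "corr_scale a b = sqrt ((1 - a\<^sup>2) * (1 - b\<^sup>2))"

definition std_cross :: "real \<Rightarrow> real \<Rightarrow> real \<Rightarrow> real \<Rightarrow> real" where
  "std_cross a b u v = (u - a) * (v - b) / corr_scale a b"

definition std_cross_sum :: "nat \<Rightarrow> real \<Rightarrow> real \<Rightarrow> (nat \<Rightarrow> real) \<Rightarrow> (nat \<Rightarrow> real) \<Rightarrow> real" where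
  "std_cross_sum n a b x y = (\<Sum>i<n. std_cross a b (x i) (y i)) / sqrt n"

definition mean_dev :: "nat \<Rightarrow> real \<Rightarrow> (nat \<Rightarrow> real) \<Rightarrow> real" where
  "mean_dev n a x = (\<Sum>i<n. x i - a) / n"

lemma corr_scale_pos: "\<bar>a\<bar> < 1 \<Longrightarrow> \<bar>b\<bar> < 1 \<Longrightarrow> corr_scale a b > 0"
  unfolding corr_scale_def by (simp add: abs_square_less_1)

lemma mean_dev_eq: "n > 0 \<Longrightarrow> mean_dev n a x = sample_mean n x - a"
  unfolding mean_dev_def sample_mean_def by (simp add: sum_subtractf field_simps)

lemma sum_sq_centered:
  assumes "x \<in> spins n" "n > 0"
  shows "(\<Sum>i<n. (x i - sample_mean n x)\<^sup>2) = n * (1 - (sample_mean n x)\<^sup>2)"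
proof -
  define m where "m = sample_mean n x"
  have S: "(\<Sum>i<n. x i) = n * m" unfolding m_def sample_mean_def using assms by simp
  have "(\<Sum>i<n. (x i - m)\<^sup>2) = (\<Sum>i<n. (x i)\<^sup>2) - 2 * m * (\<Sum>i<n. x i) + n * m\<^sup>2"
    by (simp add: power2_diff sum_subtractf sum.distrib sum_distrib_left mult_ac)
  also have "(\<Sum>i<n. (x i)\<^sup>2) = n" using spins_sq[OF assms(1)] by simp
  finally show ?thesis unfolding S m_def[symmetric] by (simp add: algebra_simps power2_eq_square)
qed

lemma sum_cross_centered:
  assumes "n > 0"
  shows "(\<Sum>i<n. (x i - sample_mean n x) * (y i - sample_mean n y)) =
     (\<Sum>i<n. (x i - a) * (y i - b)) - n * (sample_mean n x - a) * (sample_mean n y - b)"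
proof -
  define m1 where "m1 = sample_mean n x"
  define m2 where "m2 = sample_mean n y"
  have S1: "(\<Sum>i<n. x i) = n * m1" unfolding m1_def sample_mean_def using assms by simp
  have S2: "(\<Sum>i<n. y i) = n * m2" unfolding m2_def sample_mean_def using assms by simp
  have "(\<Sum>i<n. (x i - m1) * (y i - m2)) =
        (\<Sum>i<n. x i * y i) - m2 * (\<Sum>i<n. x i) - m1 * (\<Sum>i<n. y i) + n * m1 * m2"
    by (simp add: algebra_simps sum_subtractf sum.distrib sum_distrib_left)
  moreover have "(\<Sum>i<n. (x i - a) * (y i - b)) =
        (\<Sum>i<n. x i * y i) - b * (\<Sum>i<n. x i) - a * (\<Sum>i<n. y i) + n * a * b"
    by (simp add: algebra_simps sum_subtractf sum.distrib sum_distrib_left)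
  ultimately show ?thesis unfolding S1 S2 m1_def[symmetric] m2_def[symmetric] by (simp add: algebra_simps)
qed

lemma sqrt_n_sample_corr_eq:
  assumes "x \<in> spins n" "y \<in> spins n" "n > 0" "\<bar>a\<bar> < 1" "\<bar>b\<bar> < 1"
  shows "sqrt n * sample_corr n x y =
     (corr_scale a b * std_cross_sum n a b x y - sqrt n * mean_dev n a x * mean_dev n b y) /
     corr_scale (a + mean_dev n a x) (b + mean_dev n b y)"
proof -
  define m1 where "m1 = sample_mean n x"
  define m2 where "m2 = sample_mean n y"
  define r where "r = sqrt n"
  have r: "real n = r * r" "r > 0" unfolding r_def using assms(3) by simp_all
  have cross: "(\<Sum>i<n. (x i - m1) * (y i - m2)) =
               r * (corr_scale a b * std_cross_sum n a b x y - r * (m1 - a) * (m2 - b))"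
    using sum_cross_centered[OF assms(3), of x y a b] corr_scale_pos[OF assms(4,5)] r
    unfolding m1_def m2_def std_cross_sum_def std_cross_def r_def
    by (simp add: sum_divide_distrib[symmetric] algebra_simps)
  have sq: "sqrt (\<Sum>i<n. (x i - m1)\<^sup>2) * sqrt (\<Sum>i<n. (y i - m2)\<^sup>2) =
            r * r * corr_scale m1 m2"
    unfolding m1_def m2_def sum_sq_centered[OF assms(1,3)] sum_sq_centered[OF assms(2,3)] r(1)[symmetric]
    by (simp add: real_sqrt_mult r_def corr_scale_def)
  have cancel: "r * (r * N / (r * r * Q)) = N / Q" for N Q :: real
    using r(2) by (simp add: times_divide_eq_right mult.assoc[symmetric] mult_divide_mult_cancel_left)
  show ?thesis
    unfolding sample_corr_def m1_def[symmetric] m2_def[symmetric] cross sq mean_dev_eq[OF assms(3)]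
      r_def[symmetric] cancel
    by simp
qed

lemma site_expect_centered:
  "site_expect a b (\<lambda>u v. u - a) = (0::real)"
  "site_expect a b (\<lambda>u v. (u - a) * (u - a)) = (1 - a\<^sup>2 :: real)"
  "site_expect a b (\<lambda>u v. v - b) = (0::real)"
  "site_expect a b (\<lambda>u v. (v - b) * (v - b)) = (1 - b\<^sup>2 :: real)"
  unfolding site_expect_real spin_prob_def by (simp_all add: field_simps power2_eq_square)

lemma site_expect_std_cross:
  assumes "\<bar>a\<bar> < 1" "\<bar>b\<bar> < 1"
  shows "site_expect a b (std_cross a b) = (0::real)"
    and "site_expect a b (\<lambda>u v. std_cross a b u v * std_cross a b u v) = (1::real)"
proof -
  have s: "corr_scale a b > 0" by (rule corr_scale_pos[OF assms])
  have p: "(1 - a\<^sup>2) * (1 - b\<^sup>2) > 0" using assms by (simp add: abs_square_less_1)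
  then have s2: "(corr_scale a b)\<^sup>2 = (1 - a\<^sup>2) * (1 - b\<^sup>2)"
    unfolding corr_scale_def by simp
  show "site_expect a b (std_cross a b) = (0::real)"
    unfolding site_expect_real spin_prob_def std_cross_def using s by (simp add: field_simps)
  have "site_expect a b (\<lambda>u v. std_cross a b u v * std_cross a b u v) =
        (1 - a\<^sup>2) * (1 - b\<^sup>2) / (corr_scale a b)\<^sup>2"
    unfolding site_expect_real spin_prob_def std_cross_def using s by (simp add: field_simps power2_eq_square)
  then show "site_expect a b (\<lambda>u v. std_cross a b u v * std_cross a b u v) = (1::real)"
    using p by (simp add: s2) (metis diff_self mult_zero_left mult_zero_right less_irrefl)
qed

lemma pair_expect_mean_dev_sq:
  assumes "n > 0"
  shows "pair_expect n a b (\<lambda>x y. (mean_dev n a x)\<^sup>2) = (1 - a\<^sup>2) / n"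
    and "pair_expect n a b (\<lambda>x y. (mean_dev n b y)\<^sup>2) = (1 - b\<^sup>2) / n"
proof -
  have "pair_expect n a b (\<lambda>x y. (mean_dev n a x)\<^sup>2) =
        pair_expect n a b (\<lambda>x y. (1 / n\<^sup>2) * (\<Sum>i<n. (\<lambda>u v. u - a) (x i) (y i))\<^sup>2)"
    unfolding mean_dev_def by (simp add: power_divide)
  also have "\<dots> = (1 / n\<^sup>2) * (n * (1 - a\<^sup>2))"
    unfolding pair_expect_cmult by (subst pair_expect_sum_sq) (simp_all add: site_expect_centered)
  finally show "pair_expect n a b (\<lambda>x y. (mean_dev n a x)\<^sup>2) = (1 - a\<^sup>2) / n"
    using assms by (simp add: power2_eq_square)
  have "pair_expect n a b (\<lambda>x y. (mean_dev n b y)\<^sup>2) =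
        pair_expect n a b (\<lambda>x y. (1 / n\<^sup>2) * (\<Sum>i<n. (\<lambda>u v. v - b) (x i) (y i))\<^sup>2)"
    unfolding mean_dev_def by (simp add: power_divide)
  also have "\<dots> = (1 / n\<^sup>2) * (n * (1 - b\<^sup>2))"
    unfolding pair_expect_cmult by (subst pair_expect_sum_sq) (simp_all add: site_expect_centered)
  finally show "pair_expect n a b (\<lambda>x y. (mean_dev n b y)\<^sup>2) = (1 - b\<^sup>2) / n"
    using assms by (simp add: power2_eq_square)
qed

lemma pair_expect_std_cross_sum_sq:
  assumes "n > 0" "\<bar>a\<bar> < 1" "\<bar>b\<bar> < 1"
  shows "pair_expect n a b (\<lambda>x y. (std_cross_sum n a b x y)\<^sup>2) = 1"
proof -
  have "pair_expect n a b (\<lambda>x y. (std_cross_sum n a b x y)\<^sup>2) =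
        pair_expect n a b (\<lambda>x y. (1 / n) * (\<Sum>i<n. std_cross a b (x i) (y i))\<^sup>2)"
    unfolding std_cross_sum_def by (simp add: power_divide)
  also have "\<dots> = (1 / n) * (n * 1)"
    unfolding pair_expect_cmult
    by (subst pair_expect_sum_sq) (simp_all add: site_expect_std_cross[OF assms(2,3)])
  finally show ?thesis using assms by simp
qed

lemma corr_scale_ge:
  assumes "0 \<le> A" "A < 1" "\<bar>a\<bar> \<le> A" "\<bar>b\<bar> \<le> A"
  shows "corr_scale a b \<ge> 1 - A\<^sup>2"
proof -
  have "a\<^sup>2 \<le> A\<^sup>2" "b\<^sup>2 \<le> A\<^sup>2" using assms by (simp_all add: abs_le_square_iff[symmetric])
  moreover have "A\<^sup>2 < 1" using assms by (simp add: power_less_one_iff)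
  ultimately have "(1 - A\<^sup>2) * (1 - A\<^sup>2) \<le> (1 - a\<^sup>2) * (1 - b\<^sup>2)"
    by (intro mult_mono) auto
  then have "sqrt ((1 - A\<^sup>2)\<^sup>2) \<le> corr_scale a b"
    unfolding corr_scale_def power2_eq_square by (rule real_sqrt_le_mono)
  then show ?thesis using \<open>A\<^sup>2 < 1\<close> by simp
qed

lemma abs_std_cross_le:
  assumes "0 \<le> A" "A < 1" "\<bar>a\<bar> \<le> A" "\<bar>b\<bar> \<le> A" "u \<in> {-1,1}" "v \<in> {-1,1}"
  shows "\<bar>std_cross a b u v\<bar> \<le> 4 / (1 - A\<^sup>2)"
proof -
  have "A\<^sup>2 < 1" using assms by (simp add: power_less_one_iff)
  have "\<bar>u - a\<bar> \<le> 2" "\<bar>v - b\<bar> \<le> 2" using assms by auto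
  then have "\<bar>(u - a) * (v - b)\<bar> \<le> 4"
    unfolding abs_mult using mult_mono[of "\<bar>u - a\<bar>" 2 "\<bar>v - b\<bar>" 2] by simp
  then have "\<bar>(u - a) * (v - b)\<bar> / corr_scale a b \<le> 4 / (1 - A\<^sup>2)"
    using corr_scale_ge[OF assms(1-4)] \<open>A\<^sup>2 < 1\<close> by (intro frac_le) auto
  then show ?thesis using corr_scale_ge[OF assms(1-4)] \<open>A\<^sup>2 < 1\<close>
    unfolding std_cross_def by (simp add: abs_divide)
qed

lemma norm_iexp_diff_le: "cmod (iexp x - iexp y) \<le> \<bar>x - y\<bar>"
proof -
  have "iexp x - iexp y = iexp y * (iexp (x - y) - 1)"
    by (simp add: algebra_simps flip: exp_add)
  then have "cmod (iexp x - iexp y) = cmod (iexp (x - y) - 1)"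
    by (simp add: norm_mult)
  also have "\<dots> \<le> \<bar>x - y\<bar>" using iexp_approx1[of "x - y" 0] by simp
  finally show ?thesis .
qed

lemma norm_iexp_diff_le_2: "cmod (iexp x - iexp y) \<le> 2"
  using norm_triangle_ineq4[of "iexp x" "iexp y"] by simp

definition site_char :: "real \<Rightarrow> real \<Rightarrow> real \<Rightarrow> complex" where
  "site_char a b \<tau> = site_expect a b (\<lambda>u v. iexp (\<tau> * std_cross a b u v))"

lemma norm_site_char_le_1: "\<bar>a\<bar> \<le> 1 \<Longrightarrow> \<bar>b\<bar> \<le> 1 \<Longrightarrow> cmod (site_char a b \<tau>) \<le> 1"
  unfolding site_char_def using norm_site_expect_le[of a b "\<lambda>u v. iexp (\<tau> * std_cross a b u v)"]
  by (simp add: site_expect_const)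

lemma site_expect_taylor_poly:
  assumes "\<bar>a\<bar> < 1" "\<bar>b\<bar> < 1"
  shows "site_expect a b (\<lambda>u v. 1 + \<i> * of_real (\<tau> * std_cross a b u v) - of_real ((\<tau> * std_cross a b u v)\<^sup>2 / 2))
    = 1 - of_real (\<tau>\<^sup>2 / 2)"
proof -
  have "site_expect a b (\<lambda>u v. 1 + \<i> * of_real (\<tau> * std_cross a b u v) - of_real ((\<tau> * std_cross a b u v)\<^sup>2 / 2))
     = site_expect a b (\<lambda>u v. 1) + (\<i> * of_real \<tau>) * site_expect a b (\<lambda>u v. of_real (std_cross a b u v))
       - of_real (\<tau>\<^sup>2 / 2) * site_expect a b (\<lambda>u v. of_real (std_cross a b u v * std_cross a b u v))"
    by (simp add: site_expect_add site_expect_diff flip: site_expect_cmult) (simp add: power2_eq_square mult_ac)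
  also have "\<dots> = 1 - of_real (\<tau>\<^sup>2 / 2)"
    using site_expect_std_cross[OF assms] by (simp only: site_expect_of_real site_expect_const) simp
  finally show ?thesis .
qed

lemma site_char_approx:
  assumes "0 \<le> A" "A < 1" "\<bar>a\<bar> \<le> A" "\<bar>b\<bar> \<le> A"
  shows "cmod (site_char a b \<tau> - (1 - of_real (\<tau>\<^sup>2 / 2))) \<le> \<bar>\<tau>\<bar> ^ 3 * ((4 / (1 - A\<^sup>2)) ^ 3 / 6)"
proof -
  have ab: "\<bar>a\<bar> < 1" "\<bar>b\<bar> < 1" "\<bar>a\<bar> \<le> 1" "\<bar>b\<bar> \<le> 1" using assms by auto
  define T where "T u v = 1 + \<i> * of_real (\<tau> * std_cross a b u v) - of_real ((\<tau> * std_cross a b u v)\<^sup>2 / 2)"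
    for u v
  have "site_char a b \<tau> - (1 - of_real (\<tau>\<^sup>2 / 2)) = site_expect a b (\<lambda>u v. iexp (\<tau> * std_cross a b u v) - T u v)"
    using site_expect_taylor_poly[OF ab(1,2), of \<tau>] site_expect_diff[of a b _ T]
    unfolding site_char_def T_def by simp
  then have "cmod (site_char a b \<tau> - (1 - of_real (\<tau>\<^sup>2 / 2))) \<le>
             site_expect a b (\<lambda>u v. cmod (iexp (\<tau> * std_cross a b u v) - T u v))"
    using norm_site_expect_le[OF ab(3,4)] by simp
  also have "\<dots> \<le> site_expect a b (\<lambda>u v. \<bar>\<tau>\<bar> ^ 3 * ((4 / (1 - A\<^sup>2)) ^ 3 / 6))"
  proof (rule site_expect_mono[OF ab(3,4)])
    fix u v :: real assume uv: "u \<in> {-1,1}" "v \<in> {-1,1}"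
    have taylor: "(\<Sum>k\<le>2. (\<i> * complex_of_real s) ^ k / fact k) = 1 + \<i> * of_real s - of_real (s\<^sup>2 / 2)"
      for s by (simp add: eval_nat_numeral atMost_Suc power2_eq_square field_simps)
    have "cmod (iexp (\<tau> * std_cross a b u v) - T u v) \<le> \<bar>\<tau> * std_cross a b u v\<bar> ^ 3 / 6"
      using iexp_approx1[of "\<tau> * std_cross a b u v" 2] unfolding taylor T_def by (simp add: fact_numeral)
    also have "\<dots> = \<bar>\<tau>\<bar> ^ 3 * \<bar>std_cross a b u v\<bar> ^ 3 / 6" by (simp add: abs_mult power_mult_distrib)
    also have "\<dots> \<le> \<bar>\<tau>\<bar> ^ 3 * (4 / (1 - A\<^sup>2)) ^ 3 / 6"
      using abs_std_cross_le[OF assms uv] by (intro divide_right_mono mult_left_mono power_mono) auto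
    finally show "cmod (iexp (\<tau> * std_cross a b u v) - T u v) \<le> \<bar>\<tau>\<bar> ^ 3 * ((4 / (1 - A\<^sup>2)) ^ 3 / 6)"
      by simp
  qed
  also have "\<dots> = \<bar>\<tau>\<bar> ^ 3 * ((4 / (1 - A\<^sup>2)) ^ 3 / 6)" by (rule site_expect_const)
  finally show ?thesis .
qed

lemma abs_sq_diff_le: "\<bar>u\<bar> \<le> 1 \<Longrightarrow> \<bar>v\<bar> \<le> 1 \<Longrightarrow> \<bar>u\<^sup>2 - v\<^sup>2\<bar> \<le> 2 * \<bar>u - v\<bar>"
  for u v :: real
  using mult_right_mono[of "\<bar>u + v\<bar>" 2 "\<bar>u - v\<bar>"]
  by (simp add: power2_eq_square square_diff_square_factored abs_mult mult.commute)

lemma abs_var_product_diff_le: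
  fixes a b dx dy :: real
  assumes "\<bar>a\<bar> \<le> 1" "\<bar>b\<bar> \<le> 1" "\<bar>a + dx\<bar> \<le> 1" "\<bar>b + dy\<bar> \<le> 1"
  shows "\<bar>(1 - a\<^sup>2) * (1 - b\<^sup>2) - (1 - (a + dx)\<^sup>2) * (1 - (b + dy)\<^sup>2)\<bar> \<le> 2 * \<bar>dx\<bar> + 2 * \<bar>dy\<bar>"
proof -
  have split: "(1 - a\<^sup>2) * (1 - b\<^sup>2) - (1 - (a + dx)\<^sup>2) * (1 - (b + dy)\<^sup>2)
     = (1 - a\<^sup>2) * ((b + dy)\<^sup>2 - b\<^sup>2) + (1 - (b + dy)\<^sup>2) * ((a + dx)\<^sup>2 - a\<^sup>2)"
    by (simp add: algebra_simps)
  have factors: "\<bar>1 - a\<^sup>2\<bar> \<le> 1" "\<bar>1 - (b + dy)\<^sup>2\<bar> \<le> 1"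
    using assms abs_square_le_1[of a] abs_square_le_1[of "b + dy"] by auto
  have "\<bar>(b + dy)\<^sup>2 - b\<^sup>2\<bar> \<le> 2 * \<bar>dy\<bar>" "\<bar>(a + dx)\<^sup>2 - a\<^sup>2\<bar> \<le> 2 * \<bar>dx\<bar>"
    using abs_sq_diff_le[of "b + dy" b] abs_sq_diff_le[of "a + dx" a] assms by auto
  then have "\<bar>1 - a\<^sup>2\<bar> * \<bar>(b + dy)\<^sup>2 - b\<^sup>2\<bar> \<le> 1 * (2 * \<bar>dy\<bar>)"
            "\<bar>1 - (b + dy)\<^sup>2\<bar> * \<bar>(a + dx)\<^sup>2 - a\<^sup>2\<bar> \<le> 1 * (2 * \<bar>dx\<bar>)"
    using factors by (intro mult_mono; simp)+
  then show ?thesis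
    unfolding split abs_mult[symmetric]
    using abs_triangle_ineq[of "(1 - a\<^sup>2) * ((b + dy)\<^sup>2 - b\<^sup>2)" "(1 - (b + dy)\<^sup>2) * ((a + dx)\<^sup>2 - a\<^sup>2)"]
    by linarith
qed

lemma abs_sqrt_diff_le:
  fixes P Q s0 :: real
  assumes "0 < s0" "s0 \<le> sqrt P" "0 \<le> Q"
  shows "\<bar>sqrt P - sqrt Q\<bar> \<le> \<bar>P - Q\<bar> / s0"
proof -
  have P: "0 \<le> P" using assms by (metis less_le_trans order.strict_implies_order real_sqrt_lt_0_iff not_less)
  have "(sqrt P - sqrt Q) * (sqrt P + sqrt Q) = P - Q"
    using P assms(3) by (simp add: algebra_simps flip: power2_eq_square)
  then have "\<bar>sqrt P - sqrt Q\<bar> * (sqrt P + sqrt Q) = \<bar>P - Q\<bar>"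
    using P assms(3) by (metis abs_mult abs_of_nonneg add_nonneg_nonneg real_sqrt_ge_zero)
  moreover have "sqrt P + sqrt Q \<ge> s0" using assms real_sqrt_ge_zero[of Q] by linarith
  ultimately have "\<bar>sqrt P - sqrt Q\<bar> * s0 \<le> \<bar>P - Q\<bar>"
    by (metis abs_ge_zero mult_left_mono)
  then show ?thesis using assms(1) by (simp add: field_simps)
qed

lemma abs_mult_le_amgm:
  fixes g d r :: real
  assumes "r > 0"
  shows "\<bar>g\<bar> * \<bar>d\<bar> \<le> (g\<^sup>2 / r + r * d\<^sup>2) / 2"
proof -
  have "0 \<le> (\<bar>g\<bar> - r * \<bar>d\<bar>)\<^sup>2" by simp
  then have "2 * r * (\<bar>g\<bar> * \<bar>d\<bar>) \<le> g\<^sup>2 + r\<^sup>2 * d\<^sup>2"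
    by (simp add: power2_eq_square algebra_simps)
  then show ?thesis using assms by (simp add: field_simps power2_eq_square)
qed

definition dev_radius :: "real \<Rightarrow> real" where
  "dev_radius A = (1 - A) / 2"

definition var_floor :: "real \<Rightarrow> real" where
  "var_floor A = 1 - ((1 + A) / 2)\<^sup>2"

definition perturb_const :: "real \<Rightarrow> real" where
  "perturb_const A = 2 / ((1 - A\<^sup>2) * var_floor A) + 1 / var_floor A"

lemma
  assumes "0 \<le> A" "A < 1"
  shows dev_radius_pos: "dev_radius A > 0"
    and var_floor_pos: "var_floor A > 0"
    and one_minus_sq_pos: "1 - A\<^sup>2 > 0"
    and perturb_const_pos: "perturb_const A > 0"
proof -
  show "dev_radius A > 0" using assms unfolding dev_radius_def by simp
  have "((1 + A) / 2)\<^sup>2 < 1" using assms by (simp add: power_less_one_iff)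
  then show k: "var_floor A > 0" unfolding var_floor_def by simp
  show s: "1 - A\<^sup>2 > 0" using assms by (simp add: power_less_one_iff)
  show "perturb_const A > 0" unfolding perturb_const_def using k s by (simp add: add_pos_pos)
qed

lemma var_floor_le:
  assumes "0 \<le> A" "\<bar>a\<bar> \<le> A" "\<bar>d\<bar> \<le> dev_radius A"
  shows "var_floor A \<le> 1 - (a + d)\<^sup>2"
proof -
  have "\<bar>a + d\<bar> \<le> (1 + A) / 2"
    using assms abs_triangle_ineq[of a d] unfolding dev_radius_def by (simp add: field_simps)
  then have "(a + d)\<^sup>2 \<le> ((1 + A) / 2)\<^sup>2" using assms by (simp add: abs_le_square_iff[symmetric])
  then show ?thesis unfolding var_floor_def by simp
qed

lemma abs_corr_scale_diff_le:
  assumes "0 \<le> A" "A < 1" "\<bar>a\<bar> \<le> A" "\<bar>b\<bar> \<le> A" "\<bar>a + dx\<bar> \<le> 1" "\<bar>b + dy\<bar> \<le> 1"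
  shows "\<bar>corr_scale a b - corr_scale (a + dx) (b + dy)\<bar> \<le> (2 * \<bar>dx\<bar> + 2 * \<bar>dy\<bar>) / (1 - A\<^sup>2)"
proof -
  have "(1 - (a + dx)\<^sup>2) * (1 - (b + dy)\<^sup>2) \<ge> 0"
    using assms abs_square_le_1[of "a + dx"] abs_square_le_1[of "b + dy"] by simp
  then have "\<bar>corr_scale a b - corr_scale (a + dx) (b + dy)\<bar> \<le>
        \<bar>(1 - a\<^sup>2) * (1 - b\<^sup>2) - (1 - (a + dx)\<^sup>2) * (1 - (b + dy)\<^sup>2)\<bar> / (1 - A\<^sup>2)"
    using corr_scale_ge[OF assms(1-4)] one_minus_sq_pos[OF assms(1,2)]
    unfolding corr_scale_def by (intro abs_sqrt_diff_le) (auto simp: corr_scale_def)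
  also have "\<dots> \<le> (2 * \<bar>dx\<bar> + 2 * \<bar>dy\<bar>) / (1 - A\<^sup>2)"
    using abs_var_product_diff_le[of a b dx dy] assms one_minus_sq_pos[OF assms(1,2)]
    by (intro divide_right_mono) auto
  finally show ?thesis .
qed

lemma perturb_amgm_le:
  fixes g \<delta> dx dy r s0 \<kappa> :: real
  assumes "\<kappa> > 0" "s0 > 0" "r > 0" "\<bar>\<delta>\<bar> \<le> (2 * \<bar>dx\<bar> + 2 * \<bar>dy\<bar>) / s0"
  shows "(\<bar>g\<bar> * \<bar>\<delta>\<bar> + r * (\<bar>dx\<bar> * \<bar>dy\<bar>)) / \<kappa> \<le> (2 / (s0 * \<kappa>) + 1 / \<kappa>) * (g\<^sup>2 / r + r * (dx\<^sup>2 + dy\<^sup>2))"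
proof -
  have "\<bar>g\<bar> * \<bar>\<delta>\<bar> \<le> \<bar>g\<bar> * ((2 * \<bar>dx\<bar> + 2 * \<bar>dy\<bar>) / s0)"
    using assms(4) by (rule mult_left_mono) simp
  moreover have "\<bar>dx\<bar> * \<bar>dy\<bar> \<le> (dx\<^sup>2 + dy\<^sup>2) / 2"
    using abs_mult_le_amgm[of 1 dx dy] by simp
  ultimately have "(\<bar>g\<bar> * \<bar>\<delta>\<bar> + r * (\<bar>dx\<bar> * \<bar>dy\<bar>)) / \<kappa> \<le>
                   (2 * (\<bar>g\<bar> * \<bar>dx\<bar> + \<bar>g\<bar> * \<bar>dy\<bar>) / s0 + r * ((dx\<^sup>2 + dy\<^sup>2) / 2)) / \<kappa>"
    using assms by (intro divide_right_mono add_mono mult_left_mono) (auto simp: algebra_simps)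
  also have "\<dots> \<le> (2 * ((g\<^sup>2 / r + r * dx\<^sup>2) / 2 + (g\<^sup>2 / r + r * dy\<^sup>2) / 2) / s0 + r * ((dx\<^sup>2 + dy\<^sup>2) / 2)) / \<kappa>"
    using abs_mult_le_amgm[OF assms(3), of g dx] abs_mult_le_amgm[OF assms(3), of g dy] assms
    by (intro divide_right_mono add_mono mult_left_mono) auto
  also have "\<dots> = 2 / (s0 * \<kappa>) * (g\<^sup>2 / r) + (1 / (s0 * \<kappa>) + 1 / (2 * \<kappa>)) * (r * (dx\<^sup>2 + dy\<^sup>2))"
    using assms by (simp add: field_simps)
  also have "\<dots> \<le> (2 / (s0 * \<kappa>) + 1 / \<kappa>) * (g\<^sup>2 / r) + (2 / (s0 * \<kappa>) + 1 / \<kappa>) * (r * (dx\<^sup>2 + dy\<^sup>2))"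
  proof -
    have "1 / (s0 * \<kappa>) \<le> 2 / (s0 * \<kappa>)" "1 / (2 * \<kappa>) \<le> 1 / \<kappa>" "0 \<le> 1 / \<kappa>"
      using assms by (simp_all add: divide_right_mono field_simps)
    then have "2 / (s0 * \<kappa>) \<le> 2 / (s0 * \<kappa>) + 1 / \<kappa>" "1 / (s0 * \<kappa>) + 1 / (2 * \<kappa>) \<le> 2 / (s0 * \<kappa>) + 1 / \<kappa>"
      by linarith+
    then show ?thesis using assms by (intro add_mono[OF mult_right_mono mult_right_mono]) auto
  qed
  finally show ?thesis by (simp add: algebra_simps)
qed

lemma abs_corr_perturb_le:
  fixes A a b g dx dy r :: real
  assumes A: "0 \<le> A" "A < 1" "\<bar>a\<bar> \<le> A" "\<bar>b\<bar> \<le> A"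
    and d: "\<bar>dx\<bar> \<le> dev_radius A" "\<bar>dy\<bar> \<le> dev_radius A" and r: "r > 0"
  shows "\<bar>(corr_scale a b * g - r * dx * dy) / corr_scale (a + dx) (b + dy) - g\<bar>
         \<le> perturb_const A * (g\<^sup>2 / r + r * (dx\<^sup>2 + dy\<^sup>2))"
proof -
  define \<kappa> where "\<kappa> = var_floor A"
  define Q where "Q = corr_scale (a + dx) (b + dy)"
  have pos: "\<kappa> > 0" "1 - A\<^sup>2 > 0"
    using var_floor_pos[OF A(1,2)] one_minus_sq_pos[OF A(1,2)] unfolding \<kappa>_def by auto
  have floor: "\<kappa> \<le> 1 - (a + dx)\<^sup>2" "\<kappa> \<le> 1 - (b + dy)\<^sup>2"
    using var_floor_le[OF A(1,3) d(1)] var_floor_le[OF A(1,4) d(2)] unfolding \<kappa>_def by auto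
  have "\<kappa> * \<kappa> \<le> (1 - (a + dx)\<^sup>2) * (1 - (b + dy)\<^sup>2)" using floor pos by (intro mult_mono) auto
  then have "sqrt (\<kappa> * \<kappa>) \<le> Q" unfolding Q_def corr_scale_def by (rule real_sqrt_le_mono)
  then have Q: "Q \<ge> \<kappa>" using pos by simp
  have "\<bar>a + dx\<bar> \<le> 1" "\<bar>b + dy\<bar> \<le> 1"
    using floor pos by (simp_all add: abs_square_le_1[symmetric])
  then have scale: "\<bar>corr_scale a b - Q\<bar> \<le> (2 * \<bar>dx\<bar> + 2 * \<bar>dy\<bar>) / (1 - A\<^sup>2)"
    unfolding Q_def by (rule abs_corr_scale_diff_le[OF A])
  have "\<bar>(corr_scale a b * g - r * dx * dy) / Q - g\<bar> = \<bar>g * (corr_scale a b - Q) - r * dx * dy\<bar> / Q"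
    using Q pos by (simp add: field_simps abs_divide)
  also have "\<dots> \<le> (\<bar>g\<bar> * \<bar>corr_scale a b - Q\<bar> + r * (\<bar>dx\<bar> * \<bar>dy\<bar>)) / \<kappa>"
  proof (rule frac_le)
    show "\<bar>g * (corr_scale a b - Q) - r * dx * dy\<bar> \<le> \<bar>g\<bar> * \<bar>corr_scale a b - Q\<bar> + r * (\<bar>dx\<bar> * \<bar>dy\<bar>)"
      using r abs_triangle_ineq4[of "g * (corr_scale a b - Q)" "r * dx * dy"] by (simp add: abs_mult)
  qed (use Q pos r in auto)
  also have "\<dots> \<le> perturb_const A * (g\<^sup>2 / r + r * (dx\<^sup>2 + dy\<^sup>2))"
    unfolding perturb_const_def \<kappa>_def[symmetric] using pos r scale by (rule perturb_amgm_le)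
  finally show ?thesis unfolding Q_def .
qed

text \<open>Near the means \<open>iexp\<close> is 1-Lipschitz; far from them the trivial bound 2 is dominated by the
  first term.\<close>
lemma norm_iexp_corr_perturb_le:
  fixes A a b g dx dy r t :: real
  assumes A: "0 \<le> A" "A < 1" "\<bar>a\<bar> \<le> A" "\<bar>b\<bar> \<le> A" and r: "r > 0"
  shows "cmod (iexp (t * ((corr_scale a b * g - r * dx * dy) / corr_scale (a + dx) (b + dy))) - iexp (t * g))
         \<le> 2 * (dx\<^sup>2 + dy\<^sup>2) / (dev_radius A)\<^sup>2 + \<bar>t\<bar> * perturb_const A * (g\<^sup>2 / r + r * (dx\<^sup>2 + dy\<^sup>2))"
proof -
  define F where "F = (corr_scale a b * g - r * dx * dy) / corr_scale (a + dx) (b + dy)"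
  define \<eta> where "\<eta> = dev_radius A"
  have pos: "\<eta> > 0" "perturb_const A > 0"
    using dev_radius_pos[OF A(1,2)] perturb_const_pos[OF A(1,2)] unfolding \<eta>_def by auto
  have nonneg: "0 \<le> \<bar>t\<bar> * perturb_const A * (g\<^sup>2 / r + r * (dx\<^sup>2 + dy\<^sup>2))"
    using pos r by (intro mult_nonneg_nonneg add_nonneg_nonneg) auto
  show ?thesis
  proof (cases "\<bar>dx\<bar> \<le> \<eta> \<and> \<bar>dy\<bar> \<le> \<eta>")
    case False
    then have "\<eta>\<^sup>2 \<le> dx\<^sup>2 + dy\<^sup>2"
      using pos(1) by (auto simp: abs_le_square_iff[symmetric] intro: add_increasing add_increasing2 less_imp_le
        dest!: power_strict_mono[of \<eta> "\<bar>_\<bar>" 2, rotated])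
    then have "2 \<le> 2 * (dx\<^sup>2 + dy\<^sup>2) / \<eta>\<^sup>2" using pos by (simp add: field_simps)
    then show ?thesis using norm_iexp_diff_le_2[of "t * F" "t * g"] nonneg unfolding F_def \<eta>_def by linarith
  next
    case True
    have "cmod (iexp (t * F) - iexp (t * g)) \<le> \<bar>t\<bar> * \<bar>F - g\<bar>"
      using norm_iexp_diff_le[of "t * F" "t * g"] by (simp add: abs_mult flip: right_diff_distrib)
    also have "\<dots> \<le> \<bar>t\<bar> * (perturb_const A * (g\<^sup>2 / r + r * (dx\<^sup>2 + dy\<^sup>2)))"
      using abs_corr_perturb_le[OF A _ _ r] True unfolding F_def \<eta>_def by (simp add: mult_left_mono)
    finally show ?thesis unfolding F_def using pos by (simp add: mult.assoc add_increasing)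
  qed
qed

definition taylor_const :: "real \<Rightarrow> real" where
  "taylor_const A = (4 / (1 - A\<^sup>2)) ^ 3 / 6"

lemma char_std_cross_sum_approx:
  assumes A: "0 \<le> A" "A < 1" "\<bar>a\<bar> \<le> A" "\<bar>b\<bar> \<le> A" and n: "n > 0" and t: "t\<^sup>2 \<le> 4 * real n"
  shows "cmod (pair_expect n a b (\<lambda>x y. iexp (t * std_cross_sum n a b x y)) - of_real ((1 - t\<^sup>2 / (2 * n)) ^ n))
    \<le> \<bar>t\<bar> ^ 3 * taylor_const A / sqrt n"
proof -
  define \<tau> where "\<tau> = t / sqrt n"
  have sn: "sqrt n > 0" using n by simp
  have "iexp (t * std_cross_sum n a b x y) = (\<Prod>i<n. iexp (\<tau> * std_cross a b (x i) (y i)))" for x y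
  proof -
    have "t * std_cross_sum n a b x y = (\<Sum>i<n. \<tau> * std_cross a b (x i) (y i))"
      unfolding std_cross_sum_def \<tau>_def by (simp add: sum_distrib_left sum_divide_distrib)
    then show ?thesis by (simp add: of_real_sum sum_distrib_left exp_sum)
  qed
  then have "pair_expect n a b (\<lambda>x y. iexp (t * std_cross_sum n a b x y)) =
        pair_expect n a b (\<lambda>x y. \<Prod>i<n. iexp (\<tau> * std_cross a b (x i) (y i)))"
    by presburger
  also have "\<dots> = site_char a b \<tau> ^ n"
    unfolding site_char_def using pair_expect_prod[of n a b "\<lambda>i u v. iexp (\<tau> * std_cross a b u v)"] by simp
  finally have char: "pair_expect n a b (\<lambda>x y. iexp (t * std_cross_sum n a b x y)) = site_char a b \<tau> ^ n" .
  have tau2: "\<tau>\<^sup>2 = t\<^sup>2 / n" unfolding \<tau>_def using n by (simp add: power_divide)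
  have "\<bar>1 - \<tau>\<^sup>2 / 2\<bar> \<le> 1" using t n unfolding tau2 by (simp add: field_simps abs_le_iff)
  then have quadratic_le_1: "cmod (1 - of_real (\<tau>\<^sup>2 / 2)) \<le> 1" by (metis norm_of_real of_real_1 of_real_diff)
  have "cmod (site_char a b \<tau> ^ n - (1 - of_real (\<tau>\<^sup>2 / 2)) ^ n) \<le>
        n * cmod (site_char a b \<tau> - (1 - of_real (\<tau>\<^sup>2 / 2)))"
    using A by (intro norm_power_diff norm_site_char_le_1 quadratic_le_1) auto
  also have "\<dots> \<le> n * (\<bar>\<tau>\<bar> ^ 3 * taylor_const A)"
    using site_char_approx[OF A, of \<tau>] unfolding taylor_const_def by (intro mult_left_mono) auto
  also have "\<dots> = \<bar>t\<bar> ^ 3 * taylor_const A / sqrt n"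
  proof -
    have "\<bar>\<tau>\<bar> ^ 3 = \<bar>t\<bar> ^ 3 / (sqrt n * sqrt n * sqrt n)" unfolding \<tau>_def using sn
      by (simp add: abs_divide power_divide eval_nat_numeral)
    then show ?thesis using sn n by (simp add: field_simps)
  qed
  finally show ?thesis unfolding char tau2 by (simp add: field_simps)
qed

text \<open>The squared mean deviations have expectation O(1/n), which after the factor \<open>r = \<surd>n\<close>
  of the perturbation bound still leaves O(1/\<surd>n).\<close>
lemma char_corr_std_cross_diff_le:
  assumes A: "0 \<le> A" "A < 1" "\<bar>a\<bar> \<le> A" "\<bar>b\<bar> \<le> A" and n: "n > 0"
  shows "cmod (pair_expect n a b (\<lambda>x y. iexp (t * (sqrt n * sample_corr n x y))) -
                pair_expect n a b (\<lambda>x y. iexp (t * std_cross_sum n a b x y)))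
    \<le> 4 / (n * (dev_radius A)\<^sup>2) + 3 * \<bar>t\<bar> * perturb_const A / sqrt n"
proof -
  define r where "r = sqrt n"
  have r: "r > 0" "r * r = n" unfolding r_def using n by auto
  have ab: "\<bar>a\<bar> \<le> 1" "\<bar>b\<bar> \<le> 1" "\<bar>a\<bar> < 1" "\<bar>b\<bar> < 1" using A by auto
  have pos: "dev_radius A > 0" "perturb_const A > 0"
    using dev_radius_pos[OF A(1,2)] perturb_const_pos[OF A(1,2)] by auto
  define c1 where "c1 = 2 / (dev_radius A)\<^sup>2"
  define c2 where "c2 = \<bar>t\<bar> * perturb_const A / r"
  define c3 where "c3 = \<bar>t\<bar> * perturb_const A * r"
  have "cmod (pair_expect n a b (\<lambda>x y. iexp (t * (sqrt n * sample_corr n x y))) -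
              pair_expect n a b (\<lambda>x y. iexp (t * std_cross_sum n a b x y)))
     \<le> pair_expect n a b (\<lambda>x y. cmod (iexp (t * (sqrt n * sample_corr n x y)) - iexp (t * std_cross_sum n a b x y)))"
    unfolding pair_expect_diff[symmetric] by (rule norm_pair_expect_le[OF ab(1,2)])
  also have "\<dots> \<le> pair_expect n a b (\<lambda>x y. (c1 + c3) * (mean_dev n a x)\<^sup>2 + (c1 + c3) * (mean_dev n b y)\<^sup>2
                    + c2 * (std_cross_sum n a b x y)\<^sup>2)"
  proof (rule pair_expect_mono[OF ab(1,2)])
    fix x y assume xy: "x \<in> spins n" "y \<in> spins n"
    have "cmod (iexp (t * (sqrt n * sample_corr n x y)) - iexp (t * std_cross_sum n a b x y))
       \<le> 2 * ((mean_dev n a x)\<^sup>2 + (mean_dev n b y)\<^sup>2) / (dev_radius A)\<^sup>2 + \<bar>t\<bar> * perturb_const A *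
          ((std_cross_sum n a b x y)\<^sup>2 / r + r * ((mean_dev n a x)\<^sup>2 + (mean_dev n b y)\<^sup>2))"
      unfolding sqrt_n_sample_corr_eq[OF xy n ab(3,4)] r_def by (rule norm_iexp_corr_perturb_le[OF A]) (use n in simp)
    also have "\<dots> = (c1 + c3) * (mean_dev n a x)\<^sup>2 + (c1 + c3) * (mean_dev n b y)\<^sup>2
                    + c2 * (std_cross_sum n a b x y)\<^sup>2"
      unfolding c1_def c2_def c3_def by (simp add: algebra_simps add_divide_distrib)
    finally show "cmod (iexp (t * (sqrt n * sample_corr n x y)) - iexp (t * std_cross_sum n a b x y))
       \<le> (c1 + c3) * (mean_dev n a x)\<^sup>2 + (c1 + c3) * (mean_dev n b y)\<^sup>2 + c2 * (std_cross_sum n a b x y)\<^sup>2" .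
  qed
  also have "\<dots> = (c1 + c3) * ((1 - a\<^sup>2) / n) + (c1 + c3) * ((1 - b\<^sup>2) / n) + c2 * 1"
    by (simp only: pair_expect_add pair_expect_cmult pair_expect_mean_dev_sq[OF n]
        pair_expect_std_cross_sum_sq[OF n ab(3,4)])
  also have "\<dots> \<le> (c1 + c3) * (1 / n) + (c1 + c3) * (1 / n) + c2 * 1"
    unfolding c1_def c2_def c3_def using pos r n
    by (intro add_mono mult_left_mono divide_right_mono) (auto intro!: mult_nonneg_nonneg)
  also have "\<dots> = 4 / (n * (dev_radius A)\<^sup>2) + 3 * \<bar>t\<bar> * perturb_const A / sqrt n"
    unfolding c1_def c2_def c3_def r_def[symmetric] using r by (simp add: field_simps flip: r(2))
  finally show ?thesis .
qed

definition char_error :: "real \<Rightarrow> nat \<Rightarrow> real \<Rightarrow> real" where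
  "char_error A n t = 4 / (n * (dev_radius A)\<^sup>2) + 3 * \<bar>t\<bar> * perturb_const A / sqrt n
      + \<bar>t\<bar> ^ 3 * taylor_const A / sqrt n + \<bar>(1 - t\<^sup>2 / (2 * n)) ^ n - exp (- (t\<^sup>2) / 2)\<bar>"

lemma char_corr_approx:
  assumes A: "0 \<le> A" "A < 1" "\<bar>a\<bar> \<le> A" "\<bar>b\<bar> \<le> A" and n: "n > 0" and t: "t\<^sup>2 \<le> 4 * real n"
  shows "cmod (pair_expect n a b (\<lambda>x y. iexp (t * (sqrt n * sample_corr n x y))) - of_real (exp (- (t\<^sup>2) / 2)))
    \<le> char_error A n t"
proof -
  have "cmod (of_real ((1 - t\<^sup>2 / (2 * n)) ^ n) - of_real (exp (- (t\<^sup>2) / 2)) :: complex)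
      = \<bar>(1 - t\<^sup>2 / (2 * n)) ^ n - exp (- (t\<^sup>2) / 2)\<bar>"
    by (metis norm_of_real of_real_diff)
  then show ?thesis
    using norm_diff_triangle_le[OF norm_diff_triangle_le[OF char_corr_std_cross_diff_le[OF A n, of t]
        char_std_cross_sum_approx[OF A n t]]]
    unfolding char_error_def by (simp add: add.assoc)
qed

lemma const_over_sqrt_tendsto_0: "(\<lambda>n. c / sqrt (real n)) \<longlonglongrightarrow> 0"
proof -
  have "(\<lambda>n. c * sqrt (inverse (real n))) \<longlonglongrightarrow> c * sqrt 0"
    by (intro tendsto_intros lim_inverse_n)
  then show ?thesis by (simp add: real_sqrt_inverse divide_inverse)
qed

lemma char_error_tendsto_0: "(\<lambda>n. char_error A n t) \<longlonglongrightarrow> 0"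
proof -
  have "(\<lambda>n. (1 + (- (t\<^sup>2) / 2) / real n) ^ n) \<longlonglongrightarrow> exp (- (t\<^sup>2) / 2)"
    by (rule tendsto_exp_limit_sequentially)
  moreover have "1 + (- (t\<^sup>2) / 2) / real n = 1 - t\<^sup>2 / (2 * real n)" for n
    by (simp add: field_simps)
  ultimately have "(\<lambda>n. (1 - t\<^sup>2 / (2 * real n)) ^ n - exp (- (t\<^sup>2) / 2)) \<longlonglongrightarrow> 0"
    by (simp add: LIM_zero)
  then have "(\<lambda>n. \<bar>(1 - t\<^sup>2 / (2 * real n)) ^ n - exp (- (t\<^sup>2) / 2)\<bar>) \<longlonglongrightarrow> 0"
    by (rule tendsto_rabs_zero)
  moreover have "(\<lambda>n. 4 / (real n * (dev_radius A)\<^sup>2)) \<longlonglongrightarrow> 0"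
    using lim_const_over_n[of "4 / (dev_radius A)\<^sup>2"] by (simp add: field_simps)
  ultimately have "(\<lambda>n. char_error A n t) \<longlonglongrightarrow> 0 + 0 + 0 + 0"
    unfolding char_error_def by (intro tendsto_add const_over_sqrt_tendsto_0)
  then show ?thesis by simp
qed

section \<open>The Curie-Weiss model as a mixture of product laws\<close>

definition cw_prob :: "nat \<Rightarrow> real \<Rightarrow> (nat \<Rightarrow> real) \<Rightarrow> real" where
  "cw_prob n \<beta> z = exp (\<beta> / 2 * quad_form n (Q_CW n) z) / ising_Z n \<beta> (Q_CW n)"

lemma ising_Z_pos: "ising_Z n \<beta> Q > 0"
  unfolding ising_Z_def using spins_nonempty by (intro sum_pos) auto

lemma cw_prob_nonneg: "cw_prob n \<beta> z \<ge> 0"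
  unfolding cw_prob_def using ising_Z_pos[of n \<beta> "Q_CW n"] by simp

lemma sum_cw_prob: "(\<Sum>z\<in>spins n. cw_prob n \<beta> z) = 1"
  unfolding cw_prob_def using ising_Z_pos[of n \<beta> "Q_CW n"]
  by (simp add: ising_Z_def flip: sum_divide_distrib)

lemma abs_cw_expect_le_const:
  assumes "\<And>z. z \<in> spins n \<Longrightarrow> \<bar>G z\<bar> \<le> c"
  shows "\<bar>\<Sum>z\<in>spins n. cw_prob n \<beta> z * G z\<bar> \<le> c"
proof -
  have "\<bar>\<Sum>z\<in>spins n. cw_prob n \<beta> z * G z\<bar> \<le> (\<Sum>z\<in>spins n. cw_prob n \<beta> z * c)"
    using assms cw_prob_nonneg by (intro order.trans[OF sum_abs] sum_mono) (simp add: abs_mult mult_left_mono)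
  also have "\<dots> = c" by (simp add: sum_cw_prob flip: sum_distrib_right)
  finally show ?thesis .
qed

lemma quad_form_Q_CW:
  assumes "z \<in> spins n" "n > 0"
  shows "quad_form n (Q_CW n) z = ((\<Sum>i<n. z i)\<^sup>2 - n) / n"
proof -
  have "z i * Q_CW n i j * z j = z i * z j / n - (if i = j then z i * z i / n else 0)" for i j
    unfolding Q_CW_def by auto
  then have "quad_form n (Q_CW n) z = (\<Sum>i<n. \<Sum>j<n. z i * z j / n) - (\<Sum>i<n. z i * z i / n)"
    unfolding quad_form_def by (simp add: sum_subtractf)
  also have "(\<Sum>i<n. \<Sum>j<n. z i * z j / n) = (\<Sum>i<n. z i)\<^sup>2 / n"
    by (simp add: power2_eq_square sum_product sum_divide_distrib)
  also have "(\<Sum>i<n. z i * z i / n) = 1"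
    using spins_sq[OF assms(1)] assms(2) by (simp add: power2_eq_square)
  finally show ?thesis using assms(2) by (simp add: field_simps)
qed

lemma exp_cw_energy:
  assumes "z \<in> spins n" "\<beta> \<ge> 0" "n > 0"
  shows "exp (\<beta> / 2 * quad_form n (Q_CW n) z) = exp (- \<beta> / 2) * exp ((sqrt (\<beta> / n) * (\<Sum>i<n. z i))\<^sup>2 / 2)"
proof -
  have "\<beta> / 2 * quad_form n (Q_CW n) z = - \<beta> / 2 + (sqrt (\<beta> / n) * (\<Sum>i<n. z i))\<^sup>2 / 2"
    unfolding quad_form_Q_CW[OF assms(1,3)] power_mult_distrib using assms(2,3) by (simp add: field_simps)
  then show ?thesis by (simp only: exp_add[symmetric])
qed

text \<open>For \<open>u = \<plusminus>1\<close>: \<open>exp (h u) = 2 cosh h * (1 + u tanh h) / 2\<close>.\<close>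
lemma exp_sum_eq_spin_expect:
  "(\<Sum>z\<in>spins n. exp (h * (\<Sum>i<n. z i)) * G z) = (2 * cosh h) ^ n * spin_expect n (tanh h) G"
proof -
  have "exp (h * (\<Sum>i<n. z i)) = (2 * cosh h) ^ n * bern_weight n (tanh h) z" if z: "z \<in> spins n" for z
  proof -
    have "exp (h * (\<Sum>i<n. z i)) = (\<Prod>i<n. exp (h * z i))"
      by (simp add: sum_distrib_left exp_sum)
    also have "\<dots> = (\<Prod>i<n. 2 * cosh h * spin_prob (tanh h) (z i))"
    proof (intro prod.cong refl)
      fix i assume "i \<in> {..<n}"
      then have "z i = -1 \<or> z i = 1" using spins_val[OF z] by auto
      moreover have "cosh h \<noteq> 0" using cosh_real_pos[of h] by linarith
      then have "2 * cosh h * spin_prob (tanh h) (z i) = cosh h + sinh h * z i"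
        unfolding spin_prob_def tanh_def by (simp add: field_simps)
      ultimately show "exp (h * z i) = 2 * cosh h * spin_prob (tanh h) (z i)"
        using cosh_plus_sinh[of h] cosh_minus_sinh[of h] by auto
    qed
    also have "\<dots> = (2 * cosh h) ^ n * bern_weight n (tanh h) z"
      unfolding bern_weight_def by (simp add: prod.distrib)
    finally show ?thesis .
  qed
  then show ?thesis unfolding spin_expect_def by (simp add: sum_distrib_left mult.assoc)
qed

lemma gaussian_shift_integral:
  "has_bochner_integral lborel (\<lambda>w. exp (- (w\<^sup>2) / 2 + a * w)) (sqrt (2 * pi) * exp (a\<^sup>2 / 2))"
proof -
  have "has_bochner_integral lborel (\<lambda>w. (sqrt (2 * pi) * exp (a\<^sup>2 / 2)) * normal_density a 1 w)
          ((sqrt (2 * pi) * exp (a\<^sup>2 / 2)) * 1)"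
    by (intro has_bochner_integral_mult_right)
       (simp add: has_bochner_integral_integral_eq integrable_normal_density has_bochner_integral_iff)
  moreover have "(sqrt (2 * pi) * exp (a\<^sup>2 / 2)) * normal_density a 1 w = exp (- (w\<^sup>2) / 2 + a * w)" for w
    unfolding normal_density_def by (simp add: power2_diff field_simps flip: exp_add)
  ultimately show ?thesis by simp
qed

lemma gaussian_quarter_integral:
  "has_bochner_integral lborel (\<lambda>w. exp (- (w\<^sup>2) / 4)) (2 * sqrt pi)"
proof -
  have "has_bochner_integral lborel (\<lambda>w. (2 * sqrt pi) * normal_density 0 (sqrt 2) w) ((2 * sqrt pi) * 1)"
    by (intro has_bochner_integral_mult_right) (simp add: has_bochner_integral_iff)
  moreover have "(2 * sqrt pi) * normal_density 0 (sqrt 2) w = exp (- (w\<^sup>2) / 4)" for w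
  proof -
    have "sqrt (2 * pi * 2) = 2 * sqrt pi" by (simp add: real_sqrt_mult)
    then show ?thesis unfolding normal_density_def by simp
  qed
  ultimately show ?thesis by simp
qed

lemma cosh_le_exp_abs: "cosh x \<le> exp \<bar>x\<bar>" for x :: real
proof -
  have "exp x + exp (- x) \<le> exp \<bar>x\<bar> * 2" by (cases "x \<ge> 0") auto
  then show ?thesis unfolding cosh_def by (simp add: scaleR_conv_of_real)
qed

definition cw_mixing :: "nat \<Rightarrow> real \<Rightarrow> real \<Rightarrow> real" where
  "cw_mixing n \<beta> w = exp (- (w\<^sup>2) / 2) * (2 * cosh (sqrt (\<beta> / n) * w)) ^ n"

lemma cw_mixing_nonneg: "cw_mixing n \<beta> w \<ge> 0"
  unfolding cw_mixing_def by simp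

text \<open>Hubbard-Stratonovich: \<open>exp (s\<^sup>2/2) = (\<integral> exp (-w\<^sup>2/2 + s w) dw) / \<surd>(2\<pi>)\<close> with
  \<open>s = \<surd>(\<beta>/n) \<Sum>z\<^sub>i\<close> linearises the Curie-Weiss energy, so the model is a mixture of product laws.\<close>
lemma hubbard_stratonovich:
  fixes G :: "(nat \<Rightarrow> real) \<Rightarrow> real"
  assumes "\<beta> \<ge> 0" "n > 0"
  shows "integrable lborel (\<lambda>w. cw_mixing n \<beta> w * spin_expect n (tanh (sqrt (\<beta> / n) * w)) G)"
    and "(\<Sum>z\<in>spins n. exp (\<beta> / 2 * quad_form n (Q_CW n) z) * G z)
       = exp (- \<beta> / 2) / sqrt (2 * pi) *
         (\<integral>w. cw_mixing n \<beta> w * spin_expect n (tanh (sqrt (\<beta> / n) * w)) G \<partial>lborel)"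
proof -
  define c where "c = sqrt (\<beta> / n)"
  define S where "S z = (\<Sum>i<n. z i)" for z :: "nat \<Rightarrow> real"
  have mixture: "(\<Sum>z\<in>spins n. G z * exp (- (w\<^sup>2) / 2 + c * S z * w)) =
                 cw_mixing n \<beta> w * spin_expect n (tanh (c * w)) G" for w
  proof -
    have "G z * exp (- (w\<^sup>2) / 2 + c * S z * w) = exp (- (w\<^sup>2) / 2) * (exp ((c * w) * (\<Sum>i<n. z i)) * G z)"
      for z unfolding S_def by (simp only: exp_add mult_ac)
    then have "(\<Sum>z\<in>spins n. G z * exp (- (w\<^sup>2) / 2 + c * S z * w)) =
          exp (- (w\<^sup>2) / 2) * (\<Sum>z\<in>spins n. exp ((c * w) * (\<Sum>i<n. z i)) * G z)"
      by (simp only: sum_distrib_left[of "exp (- (w\<^sup>2) / 2)"])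
    then show ?thesis
      unfolding cw_mixing_def c_def[symmetric] exp_sum_eq_spin_expect by (simp only: mult.assoc)
  qed
  have int: "integrable lborel (\<lambda>w. G z * exp (- (w\<^sup>2) / 2 + c * S z * w))" for z
    using gaussian_shift_integral[of "c * S z"]
    by (intro integrable_mult_right) (auto simp: has_bochner_integral_iff)
  then have "integrable lborel (\<lambda>w. \<Sum>z\<in>spins n. G z * exp (- (w\<^sup>2) / 2 + c * S z * w))"
    by simp
  then show "integrable lborel (\<lambda>w. cw_mixing n \<beta> w * spin_expect n (tanh (sqrt (\<beta> / n) * w)) G)"
    unfolding c_def[symmetric] mixture[symmetric] .
  have "(\<Sum>z\<in>spins n. exp (\<beta> / 2 * quad_form n (Q_CW n) z) * G z)
     = (\<Sum>z\<in>spins n. exp (- \<beta> / 2) / sqrt (2 * pi) * (\<integral>w. G z * exp (- (w\<^sup>2) / 2 + c * S z * w) \<partial>lborel))"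
  proof (intro sum.cong refl)
    fix z assume z: "z \<in> spins n"
    have gauss: "(\<integral>w. exp (- (w\<^sup>2) / 2 + c * S z * w) \<partial>lborel) = sqrt (2 * pi) * exp ((c * S z)\<^sup>2 / 2)"
      by (rule has_bochner_integral_integral_eq[OF gaussian_shift_integral])
    have integral: "(\<integral>w. G z * exp (- (w\<^sup>2) / 2 + c * S z * w) \<partial>lborel) =
               G z * (sqrt (2 * pi) * exp ((c * S z)\<^sup>2 / 2))"
      unfolding integral_mult_right_zero gauss ..
    show "exp (\<beta> / 2 * quad_form n (Q_CW n) z) * G z =
      exp (- \<beta> / 2) / sqrt (2 * pi) * (\<integral>w. G z * exp (- (w\<^sup>2) / 2 + c * S z * w) \<partial>lborel)"
      unfolding exp_cw_energy[OF z assms] c_def[symmetric] S_def[symmetric] integral by simp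
  qed
  also have "\<dots> = exp (- \<beta> / 2) / sqrt (2 * pi) *
                  (\<integral>w. (\<Sum>z\<in>spins n. G z * exp (- (w\<^sup>2) / 2 + c * S z * w)) \<partial>lborel)"
    by (simp only: Bochner_Integration.integral_sum[OF int] sum_distrib_left)
  finally show "(\<Sum>z\<in>spins n. exp (\<beta> / 2 * quad_form n (Q_CW n) z) * G z)
       = exp (- \<beta> / 2) / sqrt (2 * pi) *
         (\<integral>w. cw_mixing n \<beta> w * spin_expect n (tanh (sqrt (\<beta> / n) * w)) G \<partial>lborel)"
    unfolding c_def[symmetric] mixture[symmetric] .
qed

lemma integrable_cw_mixing: "\<beta> \<ge> 0 \<Longrightarrow> n > 0 \<Longrightarrow> integrable lborel (cw_mixing n \<beta>)"
  using hubbard_stratonovich(1)[of \<beta> n "\<lambda>_. 1"] by (simp add: spin_expect_const)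

lemma integral_cw_mixing_ge:
  assumes "\<beta> \<ge> 0" "n > 0"
  shows "2 ^ n * sqrt (2 * pi) \<le> (\<integral>w. cw_mixing n \<beta> w \<partial>lborel)"
proof -
  have gauss: "has_bochner_integral lborel (\<lambda>w. 2 ^ n * exp (- (w\<^sup>2) / 2)) (2 ^ n * sqrt (2 * pi))"
    using gaussian_shift_integral[of 0] by (intro has_bochner_integral_mult_right) simp
  have "2 ^ n * exp (- (w\<^sup>2) / 2) \<le> cw_mixing n \<beta> w" for w
    using power_mono[of 2 "2 * cosh (sqrt (\<beta> / n) * w)" n] cosh_real_ge_1[of "sqrt (\<beta> / n) * w"]
    unfolding cw_mixing_def by (simp add: mult.commute)
  then have "(\<integral>w. 2 ^ n * exp (- (w\<^sup>2) / 2) \<partial>lborel) \<le> (\<integral>w. cw_mixing n \<beta> w \<partial>lborel)"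
    using gauss integrable_cw_mixing[OF assms] by (intro integral_mono) (auto simp: has_bochner_integral_iff)
  then show ?thesis using gauss by (simp add: has_bochner_integral_iff)
qed

text \<open>On the tail \<open>H < \<bar>\<surd>(\<beta>/n) w\<bar>\<close> with \<open>8\<beta> \<le> H\<close>, the Gaussian factor beats \<open>cosh\<^sup>n\<close>
  with room to spare: \<open>n(\<bar>h\<bar> + H) \<le> w\<^sup>2/4\<close> for \<open>h = \<surd>(\<beta>/n) w\<close>.\<close>
lemma cw_mixing_tail_le:
  assumes "\<beta> \<ge> 0" "n > 0" "8 * \<beta> \<le> H" "H < \<bar>sqrt (\<beta> / n) * w\<bar>"
  shows "cw_mixing n \<beta> w \<le> 2 ^ n * exp (- (n * H)) * exp (- (w\<^sup>2) / 4)"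
proof -
  define h where "h = sqrt (\<beta> / n) * w"
  have \<beta>: "\<beta> > 0" using assms by (cases "\<beta> = 0") auto
  have hH: "H < \<bar>h\<bar>" using assms unfolding h_def by simp
  have w2: "w\<^sup>2 = h\<^sup>2 * n / \<beta>" unfolding h_def using \<beta> assms(2) by (simp add: power_mult_distrib)
  have "2 \<le> \<bar>h\<bar> / (4 * \<beta>)" using hH assms(3) \<beta> by (simp add: field_simps)
  then have "\<bar>h\<bar> * 2 \<le> \<bar>h\<bar> * (\<bar>h\<bar> / (4 * \<beta>))" by (intro mult_left_mono) auto
  then have "\<bar>h\<bar> + H \<le> h\<^sup>2 / (4 * \<beta>)" using hH by (simp add: power2_eq_square)
  then have "n * (\<bar>h\<bar> + H) \<le> n * (h\<^sup>2 / (4 * \<beta>))" by (intro mult_left_mono) auto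
  then have exponent: "- (w\<^sup>2) / 2 + n * \<bar>h\<bar> \<le> - (n * H) + - (w\<^sup>2) / 4"
    unfolding w2 by (simp add: field_simps)
  have "(2 * cosh h) ^ n \<le> (2 * exp \<bar>h\<bar>) ^ n"
    by (intro power_mono) (use cosh_le_exp_abs[of h] in auto)
  also have "\<dots> = 2 ^ n * exp (n * \<bar>h\<bar>)" by (simp add: power_mult_distrib exp_of_nat_mult)
  finally have "cw_mixing n \<beta> w \<le> exp (- (w\<^sup>2) / 2) * (2 ^ n * exp (n * \<bar>h\<bar>))"
    unfolding cw_mixing_def h_def[symmetric] by (intro mult_left_mono) auto
  also have "\<dots> = 2 ^ n * exp (- (w\<^sup>2) / 2 + n * \<bar>h\<bar>)" by (simp only: exp_add mult_ac)
  also have "\<dots> \<le> 2 ^ n * exp (- (n * H) + - (w\<^sup>2) / 4)"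
    using exponent by (intro mult_left_mono) auto
  also have "\<dots> = 2 ^ n * exp (- (n * H)) * exp (- (w\<^sup>2) / 4)" by (simp only: exp_add mult_ac)
  finally show ?thesis .
qed

lemma integral_cw_mixing_tail_le:
  assumes "\<beta> \<ge> 0" "n > 0" "8 * \<beta> \<le> H"
  shows "(\<integral>w. indicator {w. H < \<bar>sqrt (\<beta> / n) * w\<bar>} w * cw_mixing n \<beta> w \<partial>lborel)
         \<le> sqrt 2 * exp (- (n * H)) * (\<integral>w. cw_mixing n \<beta> w \<partial>lborel)"
proof -
  define T where "T = {w. H < \<bar>sqrt (\<beta> / n) * w\<bar>}"
  have "T \<in> sets lborel" unfolding T_def by measurable
  then have "integrable lborel (\<lambda>w. indicator T w * cw_mixing n \<beta> w)"
    using integrable_mult_indicator[OF _ integrable_cw_mixing[OF assms(1,2)]] by simp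
  moreover have "indicator T w * cw_mixing n \<beta> w \<le> 2 ^ n * exp (- (n * H)) * exp (- (w\<^sup>2) / 4)" for w
    using cw_mixing_tail_le[OF assms, of w] unfolding T_def by (simp split: split_indicator)
  moreover have "has_bochner_integral lborel (\<lambda>w. 2 ^ n * exp (- (n * H)) * exp (- (w\<^sup>2) / 4))
                   (2 ^ n * exp (- (n * H)) * (2 * sqrt pi))"
    by (intro has_bochner_integral_mult_right gaussian_quarter_integral)
  ultimately have "(\<integral>w. indicator T w * cw_mixing n \<beta> w \<partial>lborel) \<le> 2 ^ n * exp (- (n * H)) * (2 * sqrt pi)"
    by (metis (no_types, lifting) has_bochner_integral_iff integral_mono)
  also have "\<dots> = sqrt 2 * exp (- (n * H)) * (2 ^ n * sqrt (2 * pi))"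
    by (simp add: real_sqrt_mult)
  also have "\<dots> \<le> sqrt 2 * exp (- (n * H)) * (\<integral>w. cw_mixing n \<beta> w \<partial>lborel)"
    using integral_cw_mixing_ge[OF assms(1,2)] by (intro mult_left_mono) auto
  finally show ?thesis unfolding T_def .
qed

lemma cw_expect_eq_mixture:
  assumes "\<beta> \<ge> 0" "n > 0"
  shows "(\<Sum>z\<in>spins n. cw_prob n \<beta> z * G z) =
         (\<integral>w. cw_mixing n \<beta> w * spin_expect n (tanh (sqrt (\<beta> / n) * w)) G \<partial>lborel) /
         (\<integral>w. cw_mixing n \<beta> w \<partial>lborel)"
proof -
  have "(\<Sum>z\<in>spins n. cw_prob n \<beta> z * G z) =
        (\<Sum>z\<in>spins n. exp (\<beta> / 2 * quad_form n (Q_CW n) z) * G z) / ising_Z n \<beta> (Q_CW n)"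
    unfolding cw_prob_def by (simp add: sum_divide_distrib)
  then show ?thesis
    using hubbard_stratonovich(2)[OF assms, of G] hubbard_stratonovich(2)[OF assms, of "\<lambda>_. 1"]
    unfolding ising_Z_def by (simp add: spin_expect_const)
qed

lemma abs_cw_expect_le:
  fixes G :: "(nat \<Rightarrow> real) \<Rightarrow> real"
  assumes \<beta>: "\<beta> \<ge> 0" and n: "n > 0" and H: "8 * \<beta> \<le> H"
    and G: "\<And>z. z \<in> spins n \<Longrightarrow> \<bar>G z\<bar> \<le> C"
    and product: "\<And>a. \<bar>a\<bar> \<le> tanh H \<Longrightarrow> \<bar>spin_expect n a G\<bar> \<le> \<epsilon>"
  shows "\<bar>\<Sum>z\<in>spins n. cw_prob n \<beta> z * G z\<bar> \<le> \<epsilon> + C * sqrt 2 * exp (- (n * H))"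
proof -
  define R where "R = cw_mixing n \<beta>"
  define M where "M w = spin_expect n (tanh (sqrt (\<beta> / n) * w)) G" for w
  define T where "T = {w. H < \<bar>sqrt (\<beta> / n) * w\<bar>}"
  have "C \<ge> 0" using G spins_nonempty by fastforce
  have "\<epsilon> \<ge> 0" using product[of 0] H \<beta> by simp
  have "T \<in> sets lborel" unfolding T_def by measurable
  then have intT: "integrable lborel (\<lambda>w. indicator T w * R w)"
    using integrable_mult_indicator[OF _ integrable_cw_mixing[OF \<beta> n]] unfolding R_def by simp
  have intR: "integrable lborel R" unfolding R_def by (rule integrable_cw_mixing[OF \<beta> n])
  have "0 < (2::real) ^ n * sqrt (2 * pi)" by simp
  then have IR_pos: "(\<integral>w. R w \<partial>lborel) > 0"
    using integral_cw_mixing_ge[OF \<beta> n] unfolding R_def by linarith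
  have "\<bar>R w * M w\<bar> \<le> \<epsilon> * R w + C * (indicator T w * R w)" for w
  proof (cases "w \<in> T")
    case True
    have "\<bar>M w\<bar> \<le> C"
      unfolding M_def using G tanh_real_bounds[of "sqrt (\<beta> / n) * w"] by (intro abs_spin_expect_le) auto
    then have "\<bar>R w * M w\<bar> \<le> C * R w"
      using mult_right_mono[OF _ cw_mixing_nonneg[of n \<beta> w]] unfolding R_def
      by (simp add: abs_mult abs_of_nonneg[OF cw_mixing_nonneg] mult.commute)
    moreover have "C * (indicator T w * R w) = C * R w" using True by simp
    moreover have "\<epsilon> * R w \<ge> 0" using \<open>\<epsilon> \<ge> 0\<close> cw_mixing_nonneg[of n \<beta> w] unfolding R_def by simp
    ultimately show ?thesis by linarith
  next
    case False
    then have "\<bar>tanh (sqrt (\<beta> / n) * w)\<bar> \<le> tanh H"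
      unfolding T_def
      by (simp del: tanh_real_abs add: tanh_real_abs[symmetric] strict_mono_less_eq[OF tanh_real_strict_mono])
    then have "\<bar>M w\<bar> \<le> \<epsilon>" unfolding M_def by (rule product)
    then show ?thesis using False mult_right_mono[OF _ cw_mixing_nonneg[of n \<beta> w]] unfolding R_def
      by (simp add: abs_mult abs_of_nonneg[OF cw_mixing_nonneg] mult.commute)
  qed
  then have "\<bar>\<integral>w. R w * M w \<partial>lborel\<bar> \<le> (\<integral>w. \<epsilon> * R w + C * (indicator T w * R w) \<partial>lborel)"
    using hubbard_stratonovich(1)[OF \<beta> n, of G] intR intT unfolding R_def M_def
    by (intro integral_abs_bound_integral) auto
  also have "\<dots> = \<epsilon> * (\<integral>w. R w \<partial>lborel) + C * (\<integral>w. indicator T w * R w \<partial>lborel)"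
    using intR intT by simp
  also have "\<dots> \<le> \<epsilon> * (\<integral>w. R w \<partial>lborel) + C * (sqrt 2 * exp (- (n * H)) * (\<integral>w. R w \<partial>lborel))"
    using integral_cw_mixing_tail_le[OF \<beta> n H] \<open>C \<ge> 0\<close> unfolding T_def R_def
    by (intro add_left_mono mult_left_mono)
  finally show ?thesis
    unfolding cw_expect_eq_mixture[OF \<beta> n] R_def[symmetric] M_def[symmetric] using IR_pos
    by (simp add: abs_divide divide_le_eq algebra_simps)
qed

lemma spin_expect_swap:
  "spin_expect n b (\<lambda>y. spin_expect n a (\<lambda>x. D x y)) = spin_expect n a (\<lambda>x. spin_expect n b (\<lambda>y. D x y))"
  unfolding spin_expect_def sum_distrib_left by (rule trans[OF sum.swap]) (simp add: mult_ac)

lemma abs_cw_pair_expect_le: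
  fixes D :: "(nat \<Rightarrow> real) \<Rightarrow> (nat \<Rightarrow> real) \<Rightarrow> real"
  assumes \<beta>: "\<beta>1 \<ge> 0" "\<beta>2 \<ge> 0" and n: "n > 0" and H: "8 * \<beta>1 \<le> H" "8 * \<beta>2 \<le> H"
    and D: "\<And>x y. x \<in> spins n \<Longrightarrow> y \<in> spins n \<Longrightarrow> \<bar>D x y\<bar> \<le> C"
    and product: "\<And>a b. \<bar>a\<bar> \<le> tanh H \<Longrightarrow> \<bar>b\<bar> \<le> tanh H \<Longrightarrow> \<bar>pair_expect n a b D\<bar> \<le> \<epsilon>"
  shows "\<bar>\<Sum>x\<in>spins n. cw_prob n \<beta>1 x * (\<Sum>y\<in>spins n. cw_prob n \<beta>2 y * D x y)\<bar>
         \<le> \<epsilon> + 2 * C * sqrt 2 * exp (- (n * H))"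
proof -
  have tanh_le_1: "\<bar>a\<bar> \<le> tanh H \<Longrightarrow> \<bar>a\<bar> \<le> 1" for a using tanh_real_lt_1[of H] by linarith
  define G where "G x = (\<Sum>y\<in>spins n. cw_prob n \<beta>2 y * D x y)" for x
  have "\<bar>spin_expect n a G\<bar> \<le> \<epsilon> + C * sqrt 2 * exp (- (n * H))" if a: "\<bar>a\<bar> \<le> tanh H" for a
    unfolding G_def spin_expect_sum
  proof (rule abs_cw_expect_le[OF \<beta>(2) n H(2)])
    show "\<bar>spin_expect n a (\<lambda>x. D x y)\<bar> \<le> C" if "y \<in> spins n" for y
      using D that tanh_le_1[OF a] by (intro abs_spin_expect_le) auto
    show "\<bar>spin_expect n b (\<lambda>y. spin_expect n a (\<lambda>x. D x y))\<bar> \<le> \<epsilon>" if "\<bar>b\<bar> \<le> tanh H" for b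
      using product[OF a that] by (subst spin_expect_swap) (simp only: spin_expect_nested)
  qed
  moreover have "\<bar>G x\<bar> \<le> C" if "x \<in> spins n" for x
    unfolding G_def using D[OF that] by (rule abs_cw_expect_le_const)
  ultimately have "\<bar>\<Sum>x\<in>spins n. cw_prob n \<beta>1 x * G x\<bar> \<le> (\<epsilon> + C * sqrt 2 * exp (- (n * H))) + C * sqrt 2 * exp (- (n * H))"
    by (intro abs_cw_expect_le[OF \<beta>(1) n H(1)])
  then show ?thesis unfolding G_def by simp
qed

lemma pair_expect_cos_sin_corr_le:
  assumes H: "H \<ge> 0" and ab: "\<bar>a\<bar> \<le> tanh H" "\<bar>b\<bar> \<le> tanh H" and n: "n > 0" and t: "t\<^sup>2 \<le> 4 * real n"
  shows "\<bar>pair_expect n a b (\<lambda>x y. cos (t * (sqrt n * sample_corr n x y)) - exp (- (t\<^sup>2) / 2))\<bar>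
           \<le> char_error (tanh H) n t"
    and "\<bar>pair_expect n a b (\<lambda>x y. sin (t * (sqrt n * sample_corr n x y)))\<bar> \<le> char_error (tanh H) n t"
proof -
  define Z where "Z = pair_expect n a b (\<lambda>x y. iexp (t * (sqrt n * sample_corr n x y))) - of_real (exp (- (t\<^sup>2) / 2))"
  have Re_iexp: "Re (iexp \<theta>) = cos \<theta>" and Im_iexp: "Im (iexp \<theta>) = sin \<theta>" for \<theta>
    by (simp_all add: Re_exp Im_exp)
  have Z: "cmod Z \<le> char_error (tanh H) n t"
    unfolding Z_def using H ab tanh_real_lt_1[of H] by (intro char_corr_approx n t) auto
  have "pair_expect n a b (\<lambda>x y. cos (t * (sqrt n * sample_corr n x y)) - exp (- (t\<^sup>2) / 2)) = Re Z"
    unfolding Z_def pair_expect_diff pair_expect_const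
    by (simp only: Re_iexp pair_expect_Re minus_complex.sel Re_complex_of_real)
  then show "\<bar>pair_expect n a b (\<lambda>x y. cos (t * (sqrt n * sample_corr n x y)) - exp (- (t\<^sup>2) / 2))\<bar>
           \<le> char_error (tanh H) n t"
    using abs_Re_le_cmod[of Z] Z by linarith
  have "pair_expect n a b (\<lambda>x y. sin (t * (sqrt n * sample_corr n x y))) = Im Z"
    unfolding Z_def by (simp only: Im_iexp pair_expect_Im minus_complex.sel Im_complex_of_real diff_zero)
  then show "\<bar>pair_expect n a b (\<lambda>x y. sin (t * (sqrt n * sample_corr n x y)))\<bar> \<le> char_error (tanh H) n t"
    using abs_Im_le_cmod[of Z] Z by linarith
qed

lemma norm_cw_char_corr_diff_le:
  assumes \<beta>: "\<beta>1 \<ge> 0" "\<beta>2 \<ge> 0" and n: "n > 0" and H: "8 * \<beta>1 \<le> H" "8 * \<beta>2 \<le> H"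
    and t: "t\<^sup>2 \<le> 4 * real n"
  shows "cmod ((\<Sum>x\<in>spins n. \<Sum>y\<in>spins n. of_real (cw_prob n \<beta>1 x * cw_prob n \<beta>2 y) *
                 iexp (t * (sqrt n * sample_corr n x y))) - of_real (exp (- (t\<^sup>2) / 2)))
         \<le> 2 * (char_error (tanh H) n t + 4 * sqrt 2 * exp (- (n * H)))"
proof -
  define e where "e = exp (- (t\<^sup>2) / 2)"
  define F where "F x y = t * (sqrt n * sample_corr n x y)" for x y
  define V where "V = (\<Sum>x\<in>spins n. \<Sum>y\<in>spins n. of_real (cw_prob n \<beta>1 x * cw_prob n \<beta>2 y) * iexp (F x y))"
  define \<epsilon> where "\<epsilon> = char_error (tanh H) n t + 4 * sqrt 2 * exp (- (n * H))"
  have "H \<ge> 0" using \<beta> H by linarith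
  have "(\<Sum>x\<in>spins n. \<Sum>y\<in>spins n. cw_prob n \<beta>1 x * cw_prob n \<beta>2 y) = 1"
    by (simp add: sum_cw_prob flip: sum_distrib_left sum_distrib_right)
  then have "(\<Sum>x\<in>spins n. \<Sum>y\<in>spins n. of_real (cw_prob n \<beta>1 x * cw_prob n \<beta>2 y) * (of_real e :: complex)) = e"
    by (simp only: of_real_sum[symmetric] sum_distrib_right[symmetric] of_real_1 mult_1)
  then have "V - e = (\<Sum>x\<in>spins n. \<Sum>y\<in>spins n. of_real (cw_prob n \<beta>1 x * cw_prob n \<beta>2 y) * (iexp (F x y) - e))"
    unfolding V_def by (simp only: right_diff_distrib sum_subtractf)
  then have Re: "Re (V - e) = (\<Sum>x\<in>spins n. cw_prob n \<beta>1 x * (\<Sum>y\<in>spins n. cw_prob n \<beta>2 y * (cos (F x y) - e)))"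
    and Im: "Im (V - e) = (\<Sum>x\<in>spins n. cw_prob n \<beta>1 x * (\<Sum>y\<in>spins n. cw_prob n \<beta>2 y * sin (F x y)))"
    by (simp_all add: sum_distrib_left Re_exp Im_exp mult.assoc)
  have "\<bar>Re (V - e)\<bar> \<le> \<epsilon>"
    unfolding Re \<epsilon>_def
  proof (rule order_trans[OF abs_cw_pair_expect_le[OF \<beta> n H]])
    have "0 < e" "e \<le> 1" unfolding e_def by auto
    then show "\<bar>cos (F x y) - e\<bar> \<le> 2" for x y
      using abs_cos_le_one[of "F x y"] by (simp only: abs_le_iff) linarith
    show "\<bar>pair_expect n a b (\<lambda>x y. cos (F x y) - e)\<bar> \<le> char_error (tanh H) n t"
      if "\<bar>a\<bar> \<le> tanh H" "\<bar>b\<bar> \<le> tanh H" for a b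
      unfolding F_def e_def using \<open>H \<ge> 0\<close> that n t by (rule pair_expect_cos_sin_corr_le(1))
  qed simp
  moreover have "\<bar>Im (V - e)\<bar> \<le> \<epsilon>"
    unfolding Im \<epsilon>_def
  proof (rule order_trans[OF abs_cw_pair_expect_le[OF \<beta> n H]])
    show "\<bar>sin (F x y)\<bar> \<le> 2" for x y using abs_sin_le_one[of "F x y"] by linarith
    show "\<bar>pair_expect n a b (\<lambda>x y. sin (F x y))\<bar> \<le> char_error (tanh H) n t"
      if "\<bar>a\<bar> \<le> tanh H" "\<bar>b\<bar> \<le> tanh H" for a b
      unfolding F_def using \<open>H \<ge> 0\<close> that n t by (rule pair_expect_cos_sin_corr_le(2))
  qed simp
  ultimately have "cmod (V - e) \<le> 2 * \<epsilon>" using cmod_le[of "V - e"] by linarith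
  then show ?thesis unfolding V_def F_def e_def \<epsilon>_def .
qed

section \<open>Characteristic function of the sample correlation\<close>

lemma ising_Q_CW_eq: "ising n \<beta> (Q_CW n) = point_measure (spins n) (\<lambda>z. ennreal (cw_prob n \<beta> z))"
  unfolding ising_def cw_prob_def ..

lemma integral_ising_Q_CW:
  fixes g :: "(nat \<Rightarrow> real) \<Rightarrow> 'b::{banach, second_countable_topology}"
  shows "integral\<^sup>L (ising n \<beta> (Q_CW n)) g = (\<Sum>z\<in>spins n. cw_prob n \<beta> z *\<^sub>R g z)"
  unfolding ising_Q_CW_eq by (rule lebesgue_integral_point_measure_finite) (auto simp: cw_prob_nonneg)

lemma prob_space_ising_Q_CW: "prob_space (ising n \<beta> (Q_CW n))"
  unfolding ising_Q_CW_eq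
proof (rule prob_space_point_measure)
  show "(\<Sum>z\<in>spins n. ennreal (cw_prob n \<beta> z)) = 1"
    by (subst sum_ennreal) (auto simp: cw_prob_nonneg sum_cw_prob)
qed auto

lemma measurable_pair_ising: "f \<in> borel_measurable (ising n \<beta>1 Q1 \<Otimes>\<^sub>M ising n \<beta>2 Q2)"
proof -
  have sets: "sets (ising n \<beta> Q) = sets (count_space (spins n))" for \<beta> Q
    unfolding ising_def by (rule sets_point_measure_count_space)
  have "f \<in> borel_measurable (count_space (spins n) \<Otimes>\<^sub>M count_space (spins n))"
    by (rule measurable_pair_measure_countable1) (auto intro: countable_finite)
  then show ?thesis
    by (subst measurable_cong_sets[OF sets_pair_measure_cong[OF sets sets] refl])
qed

lemma pair_prob_space_ising_Q_CW: "pair_prob_space (ising n \<beta>1 (Q_CW n)) (ising n \<beta>2 (Q_CW n))"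
  unfolding pair_prob_space_def pair_sigma_finite_def using prob_space_ising_Q_CW
  by (auto intro: prob_space_imp_sigma_finite)

lemma char_distr_corr:
  "char (distr (ising n \<beta>1 (Q_CW n) \<Otimes>\<^sub>M ising n \<beta>2 (Q_CW n)) borel (\<lambda>(x, y). sqrt n * sample_corr n x y)) t
   = (\<Sum>x\<in>spins n. \<Sum>y\<in>spins n. of_real (cw_prob n \<beta>1 x * cw_prob n \<beta>2 y) * iexp (t * (sqrt n * sample_corr n x y)))"
proof -
  interpret p: pair_prob_space "ising n \<beta>1 (Q_CW n)" "ising n \<beta>2 (Q_CW n)"
    by (rule pair_prob_space_ising_Q_CW)
  have "(\<lambda>x::real. iexp (t * x)) \<in> borel_measurable borel"
    by (intro borel_measurable_continuous_onI continuous_intros)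
  then have "char (distr (ising n \<beta>1 (Q_CW n) \<Otimes>\<^sub>M ising n \<beta>2 (Q_CW n)) borel (\<lambda>(x, y). sqrt n * sample_corr n x y)) t
      = (\<integral>p. iexp (t * (case p of (x, y) \<Rightarrow> sqrt n * sample_corr n x y)) \<partial>(ising n \<beta>1 (Q_CW n) \<Otimes>\<^sub>M ising n \<beta>2 (Q_CW n)))"
    unfolding char_def by (rule integral_distr[OF measurable_pair_ising])
  also have "\<dots> = (\<integral>x. (\<integral>y. iexp (t * (sqrt n * sample_corr n x y)) \<partial>ising n \<beta>2 (Q_CW n)) \<partial>ising n \<beta>1 (Q_CW n))"
  proof -
    have "integrable (ising n \<beta>1 (Q_CW n) \<Otimes>\<^sub>M ising n \<beta>2 (Q_CW n))
            (\<lambda>p. iexp (t * (case p of (x, y) \<Rightarrow> sqrt n * sample_corr n x y)))"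
      by (rule p.integrable_const_bound[where B=1]) (auto intro: measurable_pair_ising)
    then show ?thesis using p.integral_fst'[of "\<lambda>p. iexp (t * (case p of (x, y) \<Rightarrow> sqrt n * sample_corr n x y))"]
      by simp
  qed
  also have "\<dots> = (\<Sum>x\<in>spins n. \<Sum>y\<in>spins n. of_real (cw_prob n \<beta>1 x * cw_prob n \<beta>2 y) * iexp (t * (sqrt n * sample_corr n x y)))"
    by (simp add: integral_ising_Q_CW scaleR_conv_of_real sum_distrib_left mult_ac)
  finally show ?thesis .
qed

lemma exp_neg_mult_tendsto_0: "H > 0 \<Longrightarrow> (\<lambda>n. exp (- (real n * H))) \<longlonglongrightarrow> 0"
  using LIMSEQ_power_zero[of "exp (- H)"] by (simp add: exp_of_nat_mult[symmetric] mult.commute)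

lemma char_distr_corr_tendsto:
  assumes "\<beta>1 \<ge> 0" "\<beta>2 \<ge> 0"
  shows "(\<lambda>n. char (distr (ising n \<beta>1 (Q_CW n) \<Otimes>\<^sub>M ising n \<beta>2 (Q_CW n)) borel
                      (\<lambda>(x, y). sqrt (real n) * sample_corr n x y)) t)
         \<longlonglongrightarrow> char std_normal_distribution t"
proof -
  define H where "H = 8 * max \<beta>1 \<beta>2 + 1"
  have H: "H > 0" "8 * \<beta>1 \<le> H" "8 * \<beta>2 \<le> H" unfolding H_def using assms by auto
  define \<phi> where "\<phi> n = char (distr (ising n \<beta>1 (Q_CW n) \<Otimes>\<^sub>M ising n \<beta>2 (Q_CW n)) borel
                      (\<lambda>(x, y). sqrt (real n) * sample_corr n x y)) t" for n
  define bound where "bound n = 2 * (char_error (tanh H) n t + 4 * sqrt 2 * exp (- (real n * H)))" for n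
  have bound: "bound \<longlonglongrightarrow> 2 * (0 + 4 * sqrt 2 * 0)"
    unfolding bound_def by (intro tendsto_intros char_error_tendsto_0 exp_neg_mult_tendsto_0 H(1))
  have "\<forall>\<^sub>F n in sequentially. norm (\<phi> n - of_real (exp (- (t\<^sup>2) / 2))) \<le> bound n"
  proof (rule eventually_sequentiallyI[of "nat \<lceil>t\<^sup>2\<rceil> + 1"])
    fix n assume "nat \<lceil>t\<^sup>2\<rceil> + 1 \<le> n"
    then have "n > 0" "t\<^sup>2 \<le> 4 * real n" by linarith+
    then show "norm (\<phi> n - of_real (exp (- (t\<^sup>2) / 2))) \<le> bound n"
      unfolding \<phi>_def char_distr_corr bound_def by (rule norm_cw_char_corr_diff_le[OF assms _ H(2,3)])
  qed
  then have "(\<lambda>n. \<phi> n - of_real (exp (- (t\<^sup>2) / 2))) \<longlonglongrightarrow> 0"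
    by (rule Lim_null_comparison) (use bound in simp)
  then have "\<phi> \<longlonglongrightarrow> of_real (exp (- (t\<^sup>2) / 2))"
    by (rule LIM_zero_cancel)
  then show ?thesis unfolding \<phi>_def by (simp add: char_std_normal_distribution)
qed

theorem corollary1:
  fixes \<beta>1 \<beta>2 :: real
  assumes "\<beta>1 \<ge> 0" and "\<beta>2 \<ge> 0"
  shows "weak_conv_m
           (\<lambda>n. distr (ising n \<beta>1 (Q_CW n) \<Otimes>\<^sub>M ising n \<beta>2 (Q_CW n)) borel
                  (\<lambda>(x, y). sqrt (real n) * sample_corr n x y))
           std_normal_distribution"
proof (rule levy_continuity)
  fix n
  interpret pair_prob_space "ising n \<beta>1 (Q_CW n)" "ising n \<beta>2 (Q_CW n)"
    by (rule pair_prob_space_ising_Q_CW)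
  show "real_distribution (distr (ising n \<beta>1 (Q_CW n) \<Otimes>\<^sub>M ising n \<beta>2 (Q_CW n)) borel
                  (\<lambda>(x, y). sqrt (real n) * sample_corr n x y))"
    by (intro real_distribution_distr measurable_pair_ising)
next
  show "real_distribution std_normal_distribution" by (rule real_dist_normal_dist)
next
  fix t
  show "(\<lambda>n. char (distr (ising n \<beta>1 (Q_CW n) \<Otimes>\<^sub>M ising n \<beta>2 (Q_CW n)) borel
                  (\<lambda>(x, y). sqrt (real n) * sample_corr n x y)) t) \<longlonglongrightarrow> char std_normal_distribution t"
    by (rule char_distr_corr_tendsto[OF assms])
qed

end
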